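(* Let $\Sigma$ be a signed graph and $v$ a vertex of $\Sigma$ such that every block of $\Sigma$ containing $v$ contains a circle, and let $C$ be a circle containing $v$. Then $[v,C,-]$ is a negative vertex battery (i.e. $C$ is negative and is the only negative circle of $\Sigma$ containing $v$) if and only if: (1) the block $B$ of $\Sigma$ containing $C$ is the only unbalanced block of $\Sigma$ containing $v$, and $\deg_B(v)=2$; and (2) $[e_v, C{\downarrow}v, -]$ is a negative edge battery in $B{\downarrow}v$, i.e. $C{\downarrow}v$ is the only negative circle of $B{\downarrow}v$ containing $e_v$.
   Context: A signed graph $\Sigma=(G,\sigma)$ is a finite graph $G$ with signature $\sigma:E(G)\to\{+,-\}$. A circle is a connected 2-regular subgraph; its sign is the product of its edge signs. A subgraph is balanced if all its circles are positive, unbalanced otherwise. A block is a maximal subgraph without a cutpoint; $\deg_B(v)$ is the number of edges of $B$ incident with $v$. If $\deg_B(v)=2$ with incident edges $vv_1,vv_2$ in $B$, suppressing $v$ means deleting $v$ and these two edges and adding a new edge $e_v$ joining $v_1$ and $v_2$ with sign $\sigma(vv_1)\sigma(vv_2)$; the result is the signed graph $B{\downarrow}v$, and for a circle $C$ of $B$ through $v$, $C{\downarrow}v$ is the corresponding circle of $B{\downarrow}v$ through $e_v$. *)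

theory Defs
  imports Main
begin

text \<open>Finite signed (multi)graphs: edges have one (loop) or two (link) endpoints.
  neg e = True means the edge e has sign minus.\<close>
record ('v,'e) sgraph =
  verts :: "'v set"
  edges :: "'e set"
  ends  :: "'e \<Rightarrow> 'v set"
  neg   :: "'e \<Rightarrow> bool"

definition sgraph_wf :: "('v,'e) sgraph \<Rightarrow> bool" where
  "sgraph_wf G \<longleftrightarrow> finite (verts G) \<and> finite (edges G) \<and>
     (\<forall>e\<in>edges G. ends G e \<subseteq> verts G \<and> (card (ends G e) = 1 \<or> card (ends G e) = 2))"

type_synonym ('v,'e) subg = "'v set \<times> 'e set"

definition is_sub :: "('v,'e) sgraph \<Rightarrow> ('v,'e) subg \<Rightarrow> bool" where
  "is_sub G H \<longleftrightarrow> fst H \<subseteq> verts G \<and> snd H \<subseteq> edges G \<and>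
     (\<forall>e\<in>snd H. ends G e \<subseteq> fst H)"

definition sub_le :: "('v,'e) subg \<Rightarrow> ('v,'e) subg \<Rightarrow> bool" where
  "sub_le H H' \<longleftrightarrow> fst H \<subseteq> fst H' \<and> snd H \<subseteq> snd H'"

definition adj_in :: "('v,'e) sgraph \<Rightarrow> 'e set \<Rightarrow> 'v \<Rightarrow> 'v \<Rightarrow> bool" where
  "adj_in G F x y \<longleftrightarrow> (\<exists>e\<in>F. x \<in> ends G e \<and> y \<in> ends G e)"

definition connected_sub :: "('v,'e) sgraph \<Rightarrow> ('v,'e) subg \<Rightarrow> bool" where
  "connected_sub G H \<longleftrightarrow> fst H \<noteq> {} \<and>
     (\<forall>x\<in>fst H. \<forall>y\<in>fst H. (adj_in G (snd H))\<^sup>*\<^sup>* x y)"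

definition deg_in :: "('v,'e) sgraph \<Rightarrow> 'e set \<Rightarrow> 'v \<Rightarrow> nat" where
  "deg_in G F x = 2 * card {e\<in>F. ends G e = {x}} +
                  card {e\<in>F. x \<in> ends G e \<and> card (ends G e) = 2}"

definition circle :: "('v,'e) sgraph \<Rightarrow> ('v,'e) subg \<Rightarrow> bool" where
  "circle G H \<longleftrightarrow> is_sub G H \<and> connected_sub G H \<and> (\<forall>x\<in>fst H. deg_in G (snd H) x = 2)"

definition negative :: "('v,'e) sgraph \<Rightarrow> ('v,'e) subg \<Rightarrow> bool" where
  "negative G H \<longleftrightarrow> odd (card {e\<in>snd H. neg G e})"

definition restr :: "('v,'e) sgraph \<Rightarrow> ('v,'e) subg \<Rightarrow> ('v,'e) sgraph" where
  "restr G H = G\<lparr>verts := fst H, edges := snd H\<rparr>"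

definition unbalanced :: "('v,'e) sgraph \<Rightarrow> bool" where
  "unbalanced G \<longleftrightarrow> (\<exists>C. circle G C \<and> negative G C)"

definition has_cutpoint :: "('v,'e) sgraph \<Rightarrow> ('v,'e) subg \<Rightarrow> bool" where
  "has_cutpoint G H \<longleftrightarrow> (\<exists>x F1 F2. F1 \<union> F2 = snd H \<and> F1 \<inter> F2 = {} \<and> F1 \<noteq> {} \<and> F2 \<noteq> {} \<and>
      (\<Union>(ends G ` F1)) \<inter> (\<Union>(ends G ` F2)) \<subseteq> {x})"

definition inseparable :: "('v,'e) sgraph \<Rightarrow> ('v,'e) subg \<Rightarrow> bool" where
  "inseparable G H \<longleftrightarrow> is_sub G H \<and> connected_sub G H \<and> \<not> has_cutpoint G H"

definition block :: "('v,'e) sgraph \<Rightarrow> ('v,'e) subg \<Rightarrow> bool" where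
  "block G B \<longleftrightarrow> inseparable G B \<and> (\<forall>H. inseparable G H \<and> sub_le B H \<longrightarrow> H = B)"

text \<open>Suppression of v in block B, where e1, e2 are the two edges of B at v.
  Old edges e become Some e; the new edge e_v is None.\<close>
definition suppress :: "('v,'e) sgraph \<Rightarrow> ('v,'e) subg \<Rightarrow> 'v \<Rightarrow> 'e \<Rightarrow> 'e \<Rightarrow> ('v, 'e option) sgraph" where
  "suppress G B v e1 e2 = \<lparr>verts = fst B - {v},
     edges = Some ` (snd B - {e1, e2}) \<union> {None},
     ends = (\<lambda>x. case x of None \<Rightarrow> (ends G e1 \<union> ends G e2) - {v} | Some e \<Rightarrow> ends G e),
     neg = (\<lambda>x. case x of None \<Rightarrow> (neg G e1 \<noteq> neg G e2) | Some e \<Rightarrow> neg G e)\<rparr>"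

definition circ_suppress :: "('v,'e) subg \<Rightarrow> 'v \<Rightarrow> 'e \<Rightarrow> 'e \<Rightarrow> ('v, 'e option) subg" where
  "circ_suppress C v e1 e2 = (fst C - {v}, Some ` (snd C - {e1, e2}) \<union> {None})"

definition neg_vertex_battery :: "('v,'e) sgraph \<Rightarrow> 'v \<Rightarrow> ('v,'e) subg \<Rightarrow> bool" where
  "neg_vertex_battery G v C \<longleftrightarrow> circle G C \<and> v \<in> fst C \<and> negative G C \<and>
     (\<forall>D. circle G D \<and> v \<in> fst D \<and> negative G D \<longrightarrow> D = C)"

definition neg_edge_battery :: "('v,'e) sgraph \<Rightarrow> 'e \<Rightarrow> ('v,'e) subg \<Rightarrow> bool" where
  "neg_edge_battery G e C \<longleftrightarrow> circle G C \<and> e \<in> snd C \<and> negative G C \<and>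
     (\<forall>D. circle G D \<and> e \<in> snd D \<and> negative G D \<longrightarrow> D = C)"

end

theory Submission
  imports Defs
begin

text \<open>The ear lemma: if P is a path with both ends on a negative circle D and its interior off D,
  then P together with one of the two arcs of D is a negative circle, because the numbers of
  negative edges of the two candidates add up to |D^-| mod 2. Consequently, in an inseparable
  graph that has a negative circle, every vertex and every link lies on a negative circle.

  If C is the only negative circle through v, this forces the block B of C to be the only
  unbalanced block at v and to have no further edge at v, so deg_B(v) = 2. Conversely, the
  uniqueness of the unbalanced block puts every negative circle through v into B. When
  deg_B(v) = 2, suppressing v maps the circles of B through v bijectively and sign-preservingly
  onto the circles of B\<down>v through e_v, which turns one battery condition into the other.\<close>

section \<open>Degrees\<close>

lemma sgraph_wf_finite:
  assumes "sgraph_wf G" shows "finite (verts G)" "finite (edges G)"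
  using assms by (auto simp: sgraph_wf_def)

lemma sgraph_wf_edge:
  assumes "sgraph_wf G" "e \<in> edges G"
  shows "ends G e \<subseteq> verts G" "card (ends G e) = 1 \<or> card (ends G e) = 2"
  using assms by (auto simp: sgraph_wf_def)

lemma sgraph_wf_ends_nonempty: "sgraph_wf G \<Longrightarrow> e \<in> edges G \<Longrightarrow> ends G e \<noteq> {}"
  using sgraph_wf_edge(2) by fastforce

lemma card_2_eqI: "card A = 2 \<Longrightarrow> a \<in> A \<Longrightarrow> b \<in> A \<Longrightarrow> a \<noteq> b \<Longrightarrow> A = {a, b}"
  by (auto simp: card_2_iff)

lemma card_2_obtain_other:
  assumes "card A = 2" "v \<in> A"
  obtains a where "A = {v, a}" "a \<noteq> v"
  using assms by (auto simp: card_2_iff)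

lemma card_le_2_eq_elem:
  assumes "card S = 1 \<or> card S = 2" "w \<in> S" "k \<in> S" "z \<in> S" "k \<noteq> w" "z \<noteq> w"
  shows "z = k"
  using assms by (auto simp: card_1_singleton_iff card_2_iff)

lemma deg_in_Un:
  assumes "finite A" "finite B" "A \<inter> B = {}"
  shows "deg_in G (A \<union> B) x = deg_in G A x + deg_in G B x"
proof -
  have 1: "{e\<in>A\<union>B. ends G e = {x}} = {e\<in>A. ends G e = {x}} \<union> {e\<in>B. ends G e = {x}}"
    by auto
  have 2: "{e\<in>A\<union>B. x \<in> ends G e \<and> card (ends G e) = 2} =
     {e\<in>A. x \<in> ends G e \<and> card (ends G e) = 2} \<union> {e\<in>B. x \<in> ends G e \<and> card (ends G e) = 2}"
    by auto
  show ?thesis unfolding deg_in_def 1 2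
    by (subst card_Un_disjoint, use assms in auto)+
qed

lemma deg_in_Diff:
  assumes "finite B" "A \<subseteq> B" shows "deg_in G B x = deg_in G A x + deg_in G (B - A) x"
proof -
  have "B = A \<union> (B - A)" using assms by auto
  then show ?thesis
    using deg_in_Un[of A "B - A" G x] assms by (metis Diff_disjoint finite_Diff finite_subset)
qed

lemma deg_in_insert:
  assumes "finite F" "e \<notin> F"
  shows "deg_in G (insert e F) x = deg_in G F x + deg_in G {e} x"
  using deg_in_Un[of F "{e}" G x] assms by simp

lemma deg_in_mono: "finite B \<Longrightarrow> A \<subseteq> B \<Longrightarrow> deg_in G A x \<le> deg_in G B x"
  using deg_in_Diff[of B A G x] by simp

lemma deg_in_empty [simp]: "deg_in G {} x = 0"
  by (simp add: deg_in_def)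

lemma deg_in_singleton:
  "deg_in G {e} x =
    (if ends G e = {x} then 2 else if x \<in> ends G e \<and> card (ends G e) = 2 then 1 else 0)"
proof -
  have "{f\<in>{e}. ends G f = {x}} = (if ends G e = {x} then {e} else {})"
    "{f\<in>{e}. x \<in> ends G f \<and> card (ends G f) = 2} =
     (if x \<in> ends G e \<and> card (ends G e) = 2 then {e} else {})"
    by auto
  then show ?thesis unfolding deg_in_def by auto
qed

lemma deg_in_singleton_link:
  assumes "ends G e = {b, c}" "b \<noteq> c"
  shows "deg_in G {e} x = (if x = b \<or> x = c then 1 else 0)"
  using assms by (auto simp: deg_in_singleton)

lemma deg_in_at: "deg_in G F x = deg_in G {e\<in>F. x \<in> ends G e} x"
proof -
  have "{e\<in>F. ends G e = {x}} = {e\<in>{e\<in>F. x \<in> ends G e}. ends G e = {x}}"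
    "{e\<in>F. x \<in> ends G e \<and> card (ends G e) = 2} =
     {e\<in>{e\<in>F. x \<in> ends G e}. x \<in> ends G e \<and> card (ends G e) = 2}"
    by auto
  then show ?thesis unfolding deg_in_def by simp
qed

lemma deg_in_eq_0:
  assumes "\<forall>e\<in>F. x \<notin> ends G e"
  shows "deg_in G F x = 0"
proof -
  have "{e\<in>F. ends G e = {x}} = {}" "{e\<in>F. x \<in> ends G e \<and> card (ends G e) = 2} = {}"
    using assms by auto
  then show ?thesis unfolding deg_in_def by (simp only: card.empty)
qed

lemma deg_in_neq_0_edge: "deg_in G F x \<noteq> 0 \<Longrightarrow> \<exists>e\<in>F. x \<in> ends G e"
  using deg_in_eq_0[of F x G] by auto

lemma deg_in_ge_1:
  assumes "finite F" "e \<in> F" "x \<in> ends G e" "card (ends G e) = 1 \<or> card (ends G e) = 2"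
  shows "deg_in G F x \<ge> 1"
proof -
  have "deg_in G {e} x \<ge> 1"
    using assms(3,4) by (auto simp: deg_in_singleton card_1_singleton_iff)
  then show ?thesis using deg_in_mono[of F "{e}" G x] assms(1,2) by simp
qed

lemma sum_deg_in_eq_twice_card:
  assumes "finite F" "finite V" "\<forall>e\<in>F. ends G e \<subseteq> V \<and> (card (ends G e) = 1 \<or> card (ends G e) = 2)"
  shows "(\<Sum>x\<in>V. deg_in G F x) = 2 * card F"
  using assms(1,3)
proof (induction F rule: finite_induct)
  case empty then show ?case by simp
next
  case (insert e F)
  have sub: "ends G e \<subseteq> V" and c: "card (ends G e) = 1 \<or> card (ends G e) = 2"
    using insert by auto
  have "(\<Sum>x\<in>V. deg_in G {e} x) = 2"
  proof (cases "card (ends G e) = 1")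
    case True
    then obtain a where a: "ends G e = {a}" by (metis card_1_singletonE)
    then have "(\<Sum>x\<in>V. deg_in G {e} x) = (\<Sum>x\<in>V. if x = a then 2 else 0)"
      by (intro sum.cong) (auto simp: deg_in_singleton)
    then show ?thesis using sub a assms(2) by (simp add: sum.delta)
  next
    case False
    then obtain a b where ab: "a \<noteq> b" "ends G e = {a, b}" using c by (metis card_2_iff)
    have "(\<Sum>x\<in>V. deg_in G {e} x) = (\<Sum>x\<in>V. (if x = a then 1 else 0) + (if x = b then 1 else 0))"
      using ab by (intro sum.cong) (auto simp: deg_in_singleton_link)
    then show ?thesis using sub ab assms(2) by (simp add: sum.distrib sum.delta)
  qed
  then show ?case using insert deg_in_insert[of F e G] by (simp add: sum.distrib)
qed

section \<open>Circles\<close>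

lemma circle_is_sub: "circle G Z \<Longrightarrow> is_sub G Z" by (simp add: circle_def)

lemma circle_finite:
  assumes "sgraph_wf G" "circle G Z" shows "finite (fst Z)" "finite (snd Z)"
  using assms by (auto simp: circle_def is_sub_def sgraph_wf_def intro: finite_subset)

lemma circle_edges: "circle G Z \<Longrightarrow> snd Z \<subseteq> edges G"
  by (auto simp: circle_def is_sub_def)

lemma circle_ends: "circle G Z \<Longrightarrow> e \<in> snd Z \<Longrightarrow> ends G e \<subseteq> fst Z"
  by (auto simp: circle_def is_sub_def)

lemma circle_deg: "circle G Z \<Longrightarrow> x \<in> fst Z \<Longrightarrow> deg_in G (snd Z) x = 2"
  by (auto simp: circle_def)

lemma circle_deg_outside:
  assumes "sgraph_wf G" "circle G Z" "x \<notin> fst Z" shows "deg_in G (snd Z) x = 0"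
  using assms circle_ends[OF assms(2)] circle_finite[OF assms(1,2)] by (intro deg_in_eq_0) auto

lemma circle_deg_even:
  assumes "sgraph_wf G" "circle G Z" shows "even (deg_in G (snd Z) x)"
  using circle_deg_outside[OF assms] circle_deg[OF assms(2)] by (cases "x \<in> fst Z") auto

lemma circle_vertex_edge:
  assumes "circle G Z" "x \<in> fst Z" shows "\<exists>e\<in>snd Z. x \<in> ends G e"
  using deg_in_neq_0_edge circle_deg[OF assms] by force

lemma circle_verts_eq:
  assumes "circle G Z" shows "fst Z = \<Union>(ends G ` snd Z)"
  using circle_vertex_edge[OF assms] circle_ends[OF assms] by blast

lemma circle_nonempty:
  assumes "circle G Z" shows "fst Z \<noteq> {}" "snd Z \<noteq> {}"
  using assms circle_vertex_edge[OF assms] by (auto simp: circle_def connected_sub_def)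

text \<open>Degree 2 forces every D-edge at a vertex of Z into Z, and D is connected.\<close>
lemma circle_eq_if_edges_subset:
  assumes wf: "sgraph_wf G" and Z: "circle G Z" and D: "circle G D" and sub: "snd Z \<subseteq> snd D"
  shows "Z = D"
proof -
  have finD: "finite (snd D)" using circle_finite[OF wf D] by simp
  have V1: "fst Z \<subseteq> fst D" using circle_verts_eq[OF Z] circle_verts_eq[OF D] sub by blast
  have loc: "e \<in> snd Z" if "x \<in> fst Z" "e \<in> snd D" "x \<in> ends G e" for x e
  proof (rule ccontr)
    assume "e \<notin> snd Z"
    have "deg_in G (snd D) x = deg_in G (snd Z) x + deg_in G (snd D - snd Z) x"
      using deg_in_Diff[OF finD sub] .
    moreover have "deg_in G (snd D) x = 2" using circle_deg[OF D] V1 that by auto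
    moreover have "deg_in G (snd Z) x = 2" using circle_deg[OF Z] that by auto
    moreover have "deg_in G (snd D - snd Z) x \<ge> 1"
      using deg_in_ge_1[of "snd D - snd Z" e x G] finD that \<open>e \<notin> snd Z\<close>
        sgraph_wf_edge(2)[OF wf] circle_edges[OF D] by auto
    ultimately show False by simp
  qed
  obtain z0 where z0: "z0 \<in> fst Z" using circle_nonempty[OF Z] by auto
  have reach: "(adj_in G (snd D))\<^sup>*\<^sup>* z0 y \<Longrightarrow> y \<in> fst Z" for y
  proof (induction rule: rtranclp_induct)
    case base then show ?case using z0 .
  next
    case (step y u)
    then obtain e where "e \<in> snd D" "y \<in> ends G e" "u \<in> ends G e" by (auto simp: adj_in_def)
    then have "e \<in> snd Z" using loc step by auto
    then show ?case using circle_ends[OF Z] \<open>u \<in> ends G e\<close> by auto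
  qed
  have V2: "fst D \<subseteq> fst Z"
  proof
    fix y assume "y \<in> fst D"
    then have "(adj_in G (snd D))\<^sup>*\<^sup>* z0 y" using D z0 V1 by (auto simp: circle_def connected_sub_def)
    then show "y \<in> fst Z" using reach by auto
  qed
  have E2: "snd D \<subseteq> snd Z"
  proof
    fix e assume e: "e \<in> snd D"
    then obtain x where "x \<in> ends G e" using circle_verts_eq[OF D] circle_vertex_edge[OF D]
      sgraph_wf_edge(2)[OF wf] circle_edges[OF D] by (metis card.empty equals0I zero_neq_numeral zero_neq_one subsetD)
    then show "e \<in> snd Z" using loc[of x e] e V2 circle_ends[OF D e] by auto
  qed
  show ?thesis using V1 V2 E2 sub by (simp add: prod_eq_iff)
qed

section \<open>Paths\<close>

definition is_path :: "('v,'e) sgraph \<Rightarrow> 'e set \<Rightarrow> 'v list \<Rightarrow> 'e list \<Rightarrow> bool" where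
  "is_path G F vs es \<longleftrightarrow> length vs = Suc (length es) \<and> distinct vs \<and> set es \<subseteq> F \<and>
     (\<forall>i<length es. ends G (es!i) = {vs!i, vs!Suc i})"

lemma symp_adj_in: "symp (adj_in G F)" by (auto simp: symp_def adj_in_def)

lemma adj_in_rtranclp_sym: "(adj_in G F)\<^sup>*\<^sup>* x y \<Longrightarrow> (adj_in G F)\<^sup>*\<^sup>* y x"
  by (rule sympD[OF symp_rtranclp[OF symp_adj_in]])

lemma adj_in_rtranclp_mono: "(adj_in G F)\<^sup>*\<^sup>* x y \<Longrightarrow> F \<subseteq> F' \<Longrightarrow> (adj_in G F')\<^sup>*\<^sup>* x y"
proof -
  assume a: "(adj_in G F)\<^sup>*\<^sup>* x y" "F \<subseteq> F'"
  have "adj_in G F \<le> adj_in G F'" using a(2) by (auto simp: adj_in_def le_fun_def)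
  then show ?thesis using a(1) rtranclp_mono by (metis predicate2D)
qed

lemma is_path_len: "is_path G F vs es \<Longrightarrow> length vs = Suc (length es)" by (simp add: is_path_def)
lemma is_path_dist: "is_path G F vs es \<Longrightarrow> distinct vs" by (simp add: is_path_def)
lemma is_path_set: "is_path G F vs es \<Longrightarrow> set es \<subseteq> F" by (simp add: is_path_def)
lemma is_path_ends: "is_path G F vs es \<Longrightarrow> i < length es \<Longrightarrow> ends G (es!i) = {vs!i, vs!Suc i}"
  by (simp add: is_path_def)

lemma is_path_neq: "is_path G F vs es \<Longrightarrow> i < length es \<Longrightarrow> vs!i \<noteq> vs!Suc i"
  by (simp add: is_path_def nth_eq_iff_index_eq)

lemma is_path_card2: "is_path G F vs es \<Longrightarrow> i < length es \<Longrightarrow> card (ends G (es!i)) = 2"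
  using is_path_neq is_path_ends by fastforce

lemma is_path_at: 
  assumes "is_path G F vs es" "i < length es" 
  shows "x \<in> ends G (es!i) \<longleftrightarrow> x = vs!i \<or> x = vs!Suc i"
  using is_path_ends[OF assms] by auto

lemma is_path_edge_inj:
  assumes p: "is_path G F vs es" and "i < length es" "j < length es" "es!i = es!j"
  shows "i = j"
proof -
  have "{vs!i, vs!Suc i} = {vs!j, vs!Suc j}" using is_path_ends[OF p] assms by metis
  moreover have "length vs = Suc (length es)" "distinct vs" using p by (auto simp: is_path_def)
  ultimately show ?thesis using assms by (auto simp: doubleton_eq_iff nth_eq_iff_index_eq)
qed

lemma is_path_deg:
  assumes p: "is_path G F vs es"
  shows "deg_in G (set es) x = card {i. i < length es \<and> (x = vs!i \<or> x = vs!Suc i)}"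
proof -
  have a: "{e\<in>set es. ends G e = {x}} = {}"
  proof -
    { fix i assume "i<length es" "ends G (es!i) = {x}"
      then have False using is_path_card2[OF p, of i] by simp }
    then show ?thesis by (auto simp: in_set_conv_nth)
  qed
  have b: "{e\<in>set es. x \<in> ends G e \<and> card (ends G e) = 2} = (\<lambda>i. es!i) ` {i. i < length es \<and> (x = vs!i \<or> x = vs!Suc i)}"
    using is_path_card2[OF p] is_path_at[OF p] by (auto simp: in_set_conv_nth)
  have "inj_on (\<lambda>i. es!i) {i. i < length es \<and> (x = vs!i \<or> x = vs!Suc i)}"
    using is_path_edge_inj[OF p] by (auto simp: inj_on_def)
  then show ?thesis unfolding deg_in_def a b by (simp add: card_image)
qed

lemma is_path_deg_vs:
  assumes p: "is_path G F vs es" and j: "j \<le> length es"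
  shows "deg_in G (set es) (vs!j) = card {i. i < length es \<and> (i = j \<or> Suc i = j)}"
proof -
  have "{i. i < length es \<and> (vs!j = vs!i \<or> vs!j = vs!Suc i)} = {i. i < length es \<and> (i = j \<or> Suc i = j)}"
    using p j by (auto simp: is_path_def nth_eq_iff_index_eq)
  then show ?thesis using is_path_deg[OF p] by simp
qed

lemma is_path_deg_out:
  assumes p: "is_path G F vs es" and "x \<notin> set vs"
  shows "deg_in G (set es) x = 0"
proof -
  have "{i. i < length es \<and> (x = vs!i \<or> x = vs!Suc i)} = {}"
    using assms by (auto simp: is_path_def)
  then show ?thesis using is_path_deg[OF p] by simp
qed

lemma is_path_deg_inner:
  assumes p: "is_path G F vs es" and "0 < j" "j < length es"
  shows "deg_in G (set es) (vs!j) = 2"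
proof -
  have "{i. i < length es \<and> (i = j \<or> Suc i = j)} = {j - 1, j}" using assms by auto
  then show ?thesis using is_path_deg_vs[OF p] assms by simp
qed

lemma is_path_deg_first:
  assumes p: "is_path G F vs es" and "0 < length es"
  shows "deg_in G (set es) (vs!0) = 1"
proof -
  have "{i. i < length es \<and> (i = 0 \<or> Suc i = 0)} = {0}" using assms by auto
  then show ?thesis using is_path_deg_vs[OF p] assms by simp
qed

lemma is_path_deg_last:
  assumes p: "is_path G F vs es" and "0 < length es"
  shows "deg_in G (set es) (vs!length es) = 1"
proof -
  have "{i. i < length es \<and> (i = length es \<or> Suc i = length es)} = {length es - 1}" using assms by auto
  then show ?thesis using is_path_deg_vs[OF p] assms by simp
qed

lemma is_path_deg_at:
  assumes p: "is_path G F vs es" and n: "0 < length es" and j: "j \<le> length es"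
  shows "deg_in G (set es) (vs!j) = (if j = 0 \<or> j = length es then 1 else 2)"
  using is_path_deg_first[OF p n] is_path_deg_last[OF p n] is_path_deg_inner[OF p, of j] j
  by auto

lemma is_path_take:
  assumes p: "is_path G F vs es" and k: "k \<le> length es"
  shows "is_path G F (take (Suc k) vs) (take k es)"
  using p k unfolding is_path_def by (auto dest: in_set_takeD)

lemma is_path_drop:
  assumes p: "is_path G F vs es" and k: "k \<le> length es"
  shows "is_path G F (drop k vs) (drop k es)"
  using p k unfolding is_path_def by (auto dest: in_set_dropD simp: add.commute)

lemma is_path_cons:
  assumes p: "is_path G F vs es" and "z \<notin> set vs" "ends G f = {z, vs!0}" "f \<in> F"
  shows "is_path G F (z#vs) (f#es)"
  using assms unfolding is_path_def by (auto simp: nth_Cons split: nat.split)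

lemma is_path_vs_ends:
  assumes p: "is_path G F vs es" "v \<in> set vs" "0 < length es"
  shows "\<exists>e\<in>set es. v \<in> ends G e"
proof -
  obtain j where j: "j < length vs" "vs!j = v" using assms by (auto simp: in_set_conv_nth)
  show ?thesis
  proof (cases "j < length es")
    case True then show ?thesis using is_path_ends[OF p(1) True] j by (auto intro!: bexI[of _ "es!j"])
  next
    case False then have "j = Suc (length es - 1)" using j is_path_len[OF p(1)] assms(3) by auto
    then show ?thesis using is_path_ends[OF p(1), of "length es - 1"] j assms(3)
      by (auto intro!: bexI[of _ "es!(length es - 1)"])
  qed
qed

lemma is_path_mono: "is_path G F vs es \<Longrightarrow> F \<subseteq> F' \<Longrightarrow> is_path G F' vs es"
  by (auto simp: is_path_def)

lemma is_path_vs_sub: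
  assumes wf: "sgraph_wf G" and p: "is_path G F vs es" and F: "F \<subseteq> edges G" and n: "0 < length es"
  shows "set vs \<subseteq> verts G"
proof
  fix x assume "x \<in> set vs"
  then obtain f where "f \<in> set es" "x \<in> ends G f" using is_path_vs_ends[OF p _ n] by blast
  then show "x \<in> verts G" using is_path_set[OF p] F sgraph_wf_edge(1)[OF wf] by blast
qed

lemma rtranclp_adj_in_path:
  assumes "(adj_in G F)\<^sup>*\<^sup>* a b" and cards: "\<forall>e\<in>F. card (ends G e) = 1 \<or> card (ends G e) = 2"
  shows "\<exists>vs es. is_path G F vs es \<and> vs!0 = a \<and> vs!length es = b"
  using assms(1)
proof (induction rule: converse_rtranclp_induct)
  case base
  show ?case by (rule exI[of _ "[b]"], rule exI[of _ "[]"]) (simp add: is_path_def)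
next
  case (step a a')
  then obtain vs es where p: "is_path G F vs es" "vs!0 = a'" "vs!length es = b" by blast
  obtain e where e: "e \<in> F" "a \<in> ends G e" "a' \<in> ends G e" using step by (auto simp: adj_in_def)
  show ?case
  proof (cases "a \<in> set vs")
    case True
    then obtain k where k: "k < length vs" "vs!k = a" by (auto simp: in_set_conv_nth)
    have kl: "k \<le> length es" using k is_path_len[OF p(1)] by simp
    show ?thesis using is_path_drop[OF p(1) kl] k kl p is_path_len[OF p(1)]
      by (intro exI[of _ "drop k vs"] exI[of _ "drop k es"]) auto
  next
    case False
    then have "a \<noteq> a'" using p is_path_len[OF p(1)] by (metis nth_mem zero_less_Suc)
    then have "ends G e = {a, a'}" using e cards card_2_eqI by (metis card_1_singletonE singletonD)
    then have "is_path G F (a#vs) (e#es)" using is_path_cons[OF p(1) False] e p by auto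
    then show ?thesis using p by (intro exI[of _ "a#vs"] exI[of _ "e#es"]) auto
  qed
qed

lemma is_path_reach:
  assumes p: "is_path G F vs es" and j: "j \<le> length es"
  shows "(adj_in G (set es))\<^sup>*\<^sup>* (vs!0) (vs!j)"
  using j
proof (induction j)
  case 0 then show ?case by simp
next
  case (Suc j)
  then have "adj_in G (set es) (vs!j) (vs!Suc j)" using is_path_ends[OF p, of j]
    by (auto simp: adj_in_def intro!: bexI[of _ "es!j"])
  then show ?case using Suc by auto
qed

lemma loop_circle:
  assumes "e \<in> edges G" "ends G e = {x}" "x \<in> verts G"
  shows "circle G ({x}, {e})"
  using assms unfolding circle_def is_sub_def connected_sub_def by (auto simp: deg_in_singleton)

lemma circle_of_path_closing_edge:
  assumes wf: "sgraph_wf G" and p: "is_path G (edges G) vs es" and n: "0 < length es"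
    and e: "e \<in> edges G" "e \<notin> set es" "ends G e = {vs!0, vs!length es}"
  shows "circle G (set vs, insert e (set es))"
proof -
  have len: "length vs = Suc (length es)" using is_path_len[OF p] .
  have dist: "distinct vs" using is_path_dist[OF p] .
  have ne: "vs!0 \<noteq> vs!length es" using dist len n by (simp add: nth_eq_iff_index_eq)
  have sube: "set es \<subseteq> edges G" using is_path_set[OF p] .
  have vsV: "set vs \<subseteq> verts G" using is_path_vs_sub[OF wf p subset_refl n] .
  have in_vs: "vs!i \<in> set vs" if "i \<le> length es" for i using that len by simp
  have "ends G f \<subseteq> set vs" if f: "f \<in> insert e (set es)" for f
    using f e(3) is_path_ends[OF p] in_vs by (auto simp: in_set_conv_nth)
  then have issub: "is_sub G (set vs, insert e (set es))"
    using vsV sube e(1) by (auto simp: is_sub_def)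
  have de: "deg_in G {e} x = (if x = vs!0 \<or> x = vs!length es then 1 else 0)" for x
    using e ne by (auto simp: deg_in_singleton)
  have deg: "deg_in G (insert e (set es)) x = 2" if xin: "x \<in> set vs" for x
  proof -
    obtain j where j: "j \<le> length es" "vs!j = x" using xin len by (metis in_set_conv_nth less_Suc_eq_le)
    have "x = vs!0 \<longleftrightarrow> j = 0" "x = vs!length es \<longleftrightarrow> j = length es"
      using j dist len by (auto simp: nth_eq_iff_index_eq)
    then show ?thesis using deg_in_insert[of "set es" e G x] e(2) de[of x] is_path_deg_at[OF p n j(1)] j(2)
      by auto
  qed
  have conn: "connected_sub G (set vs, insert e (set es))"
    unfolding connected_sub_def
  proof (intro conjI ballI)
    show "fst (set vs, insert e (set es)) \<noteq> {}" using len by auto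
    fix x y assume "x \<in> fst (set vs, insert e (set es))" "y \<in> fst (set vs, insert e (set es))"
    then obtain i j where ij: "i \<le> length es" "vs!i = x" "j \<le> length es" "vs!j = y"
      using len by (auto simp: in_set_conv_nth less_Suc_eq_le)
    have m: "(adj_in G (set es))\<^sup>*\<^sup>* a b \<Longrightarrow> (adj_in G (insert e (set es)))\<^sup>*\<^sup>* a b" for a b
      by (erule adj_in_rtranclp_mono) auto
    have r1: "(adj_in G (insert e (set es)))\<^sup>*\<^sup>* (vs!0) x" using m is_path_reach[OF p ij(1)] ij by simp
    have r2: "(adj_in G (insert e (set es)))\<^sup>*\<^sup>* (vs!0) y" using m is_path_reach[OF p ij(3)] ij by simp
    show "(adj_in G (snd (set vs, insert e (set es))))\<^sup>*\<^sup>* x y"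
      using rtranclp_trans[OF adj_in_rtranclp_sym[OF r1] r2] by simp
  qed
  have deg': "\<forall>x\<in>fst (set vs, insert e (set es)). deg_in G (snd (set vs, insert e (set es))) x = 2"
    using deg by simp
  show ?thesis unfolding circle_def using issub conn deg' by blast
qed

section \<open>Even edge sets and negative circles\<close>

lemma other_link_at:
  assumes fin: "finite X" and d: "card {e\<in>X. x \<in> ends G e \<and> card (ends G e) = 2} \<ge> 2" and f: "f \<in> X"
  shows "\<exists>e'\<in>X. e' \<noteq> f \<and> x \<in> ends G e' \<and> card (ends G e') = 2"
proof (rule ccontr)
  assume "\<not> ?thesis"
  then have "{e\<in>X. x \<in> ends G e \<and> card (ends G e) = 2} \<subseteq> {f}" by auto
  then have "card {e\<in>X. x \<in> ends G e \<and> card (ends G e) = 2} \<le> 1"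
    using card_mono[of "{f}"] by fastforce
  then show False using d by simp
qed

lemma longest_path_exists:
  assumes wf: "sgraph_wf G" and X: "X \<subseteq> edges G" and p: "is_path G X vs0 es0" "0 < length es0"
  obtains vs es where "is_path G X vs es" "0 < length es"
    "\<And>vs' es'. is_path G X vs' es' \<Longrightarrow> length es' \<le> length es"
proof -
  define P where "P n \<longleftrightarrow> (\<exists>vs es. is_path G X vs es \<and> 0 < length es \<and> length es = n)" for n
  have bound: "n \<le> card (verts G)" if "is_path G X vs es" "0 < length es" "length es = n" for vs es n
  proof -
    have "card (set vs) \<le> card (verts G)"
      using is_path_vs_sub[OF wf that(1) X that(2)] sgraph_wf_finite[OF wf] card_mono by blast
    then show ?thesis using distinct_card[OF is_path_dist[OF that(1)]] is_path_len[OF that(1)] that by simp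
  qed
  have "P (length es0)" using p unfolding P_def by blast
  moreover have "\<forall>m. P m \<longrightarrow> m \<le> card (verts G)" using bound unfolding P_def by blast
  ultimately obtain n where n: "P n" "\<forall>m. P m \<longrightarrow> m \<le> n"
    using Nat.ex_has_greatest_nat by blast
  then obtain vs es where vs: "is_path G X vs es" "0 < length es" "length es = n"
    unfolding P_def by blast
  have "length es' \<le> length es" if "is_path G X vs' es'" for vs' es'
  proof (cases "length es' = 0")
    case False
    then have "P (length es')" using that unfolding P_def by blast
    then show ?thesis using n(2) vs(3) by blast
  qed simp
  then show thesis using that vs(1,2) by blast
qed

text \<open>Take a longest path in X: its first vertex has even, hence at least two, X-degree,
  so a second link leaves it; by maximality that link returns to the path and closes a circle.\<close>
lemma even_degree_has_circle:
  assumes wf: "sgraph_wf G" and X: "X \<subseteq> edges G" "X \<noteq> {}" and ev: "\<forall>x. even (deg_in G X x)"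
  shows "\<exists>Z. circle G Z \<and> snd Z \<subseteq> X"
proof (cases "\<exists>e\<in>X. \<exists>x. ends G e = {x}")
  case True
  then obtain e x where e: "e \<in> X" "ends G e = {x}" by blast
  then have "x \<in> verts G" using sgraph_wf_edge(1)[OF wf] X by blast
  then show ?thesis using loop_circle[of e G x] e X by (intro exI[of _ "({x},{e})"]) auto
next
  case False
  have fin: "finite X" using X sgraph_wf_finite[OF wf] finite_subset by blast
  have link: "card (ends G e) = 2" if "e \<in> X" for e
    using sgraph_wf_edge(2)[OF wf, of e] that X False by (auto simp: card_1_singleton_iff)
  obtain e0 where e0: "e0 \<in> X" using X by blast
  obtain a b where ab: "a \<noteq> b" "ends G e0 = {a,b}" using link[OF e0] unfolding card_2_iff by blast
  have "is_path G X [a,b] [e0]" using ab e0 by (auto simp: is_path_def)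
  moreover have "0 < length [e0]" by simp
  ultimately obtain vs es where p: "is_path G X vs es" "0 < length es"
    and longest: "\<And>vs' es'. is_path G X vs' es' \<Longrightarrow> length es' \<le> length es"
    by (rule longest_path_exists[OF wf X(1)]) blast
  define x where "x = vs!0"
  have len: "length vs = Suc (length es)" using is_path_len[OF p(1)] .
  have dist: "distinct vs" using is_path_dist[OF p(1)] .
  have es0: "es!0 \<in> X" using is_path_set[OF p(1)] p(2) by auto
  have xe0: "x \<in> ends G (es!0)" using is_path_ends[OF p(1) p(2)] x_def by simp
  have "deg_in G X x \<ge> 2"
    using deg_in_ge_1[OF fin es0 xe0] link[OF es0] ev[rule_format, of x] by presburger
  moreover have "{e\<in>X. ends G e = {x}} = {}" using False by blast
  ultimately have "card {e\<in>X. x \<in> ends G e \<and> card (ends G e) = 2} \<ge> 2"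
    unfolding deg_in_def by simp
  then have "\<exists>e'\<in>X. e' \<noteq> es!0 \<and> x \<in> ends G e' \<and> card (ends G e') = 2"
    by (rule other_link_at[OF fin _ es0])
  then obtain e' where e': "e' \<in> X" "e' \<noteq> es!0" "x \<in> ends G e'" by blast
  obtain z where z: "ends G e' = {x, z}" "z \<noteq> x"
    using card_2_obtain_other[OF link[OF e'(1)] e'(3)] .
  have e'_new: "e' \<notin> set es"
  proof
    assume "e' \<in> set es"
    then obtain j where j: "j < length es" "es!j = e'" by (auto simp: in_set_conv_nth)
    have "x = vs!j \<or> x = vs!Suc j" using is_path_at[OF p(1) j(1)] e'(3) j by simp
    then have "j = 0" using dist len j x_def by (auto simp: nth_eq_iff_index_eq)
    then show False using j e'(2) by simp
  qed
  have "z \<in> set vs"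
  proof (rule ccontr)
    assume "z \<notin> set vs"
    then have "is_path G X (z#vs) (e'#es)"
      using is_path_cons[OF p(1)] z e' x_def by (simp add: insert_commute)
    then show False using longest by force
  qed
  then obtain i where i: "i < length vs" "vs!i = z" by (auto simp: in_set_conv_nth)
  have i0: "0 < i" using i z x_def by (cases i) auto
  have il: "i \<le> length es" using i len by simp
  have p': "is_path G X (take (Suc i) vs) (take i es)" using is_path_take[OF p(1) il] .
  have "circle G (set (take (Suc i) vs), insert e' (set (take i es)))"
  proof (rule circle_of_path_closing_edge[OF wf is_path_mono[OF p' X(1)]])
    show "0 < length (take i es)" "e' \<in> edges G" "e' \<notin> set (take i es)"
      using il i0 e'(1) X(1) e'_new by (auto dest: in_set_takeD)
    show "ends G e' = {take (Suc i) vs ! 0, take (Suc i) vs ! length (take i es)}"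
      using z x_def i il by (simp add: insert_commute)
  qed
  moreover have "insert e' (set (take i es)) \<subseteq> X" using e' is_path_set[OF p'] by auto
  ultimately show ?thesis by fastforce
qed

definition num_neg :: "('v,'e) sgraph \<Rightarrow> 'e set \<Rightarrow> nat" where
  "num_neg G F = card {e\<in>F. neg G e}"

lemma num_neg_Un:
  assumes "finite A" "finite B" "A \<inter> B = {}"
  shows "num_neg G (A \<union> B) = num_neg G A + num_neg G B"
proof -
  have "{e\<in>A\<union>B. neg G e} = {e\<in>A. neg G e} \<union> {e\<in>B. neg G e}" by auto
  then show ?thesis unfolding num_neg_def using assms by (simp only:) (rule card_Un_disjoint, auto)
qed

lemma negative_iff_num_neg: "negative G Z \<longleftrightarrow> odd (num_neg G (snd Z))"
  by (simp add: negative_def num_neg_def)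

lemma even_degree_has_negative_circle:
  assumes wf: "sgraph_wf G" and X: "X \<subseteq> edges G" and ev: "\<forall>x. even (deg_in G X x)"
    and ng: "odd (num_neg G X)"
  shows "\<exists>Z. circle G Z \<and> negative G Z \<and> snd Z \<subseteq> X"
  using X ev ng
proof (induction "card X" arbitrary: X rule: less_induct)
  case less
  have fin: "finite X" using less.prems sgraph_wf_finite[OF wf] finite_subset by blast
  have "X \<noteq> {}" using less.prems by (auto simp: num_neg_def)
  then obtain Z where Z: "circle G Z" "snd Z \<subseteq> X" using even_degree_has_circle[OF wf less.prems(1)] less.prems by blast
  show ?case
  proof (cases "negative G Z")
    case True then show ?thesis using Z by blast
  next
    case False
    have finZ: "finite (snd Z)" using circle_finite[OF wf Z(1)] by simp
    define Y where "Y = X - snd Z"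
    have XY: "X = snd Z \<union> Y" "snd Z \<inter> Y = {}" using Z Y_def by auto
    have "Y \<subset> X" using Z circle_nonempty[OF Z(1)] unfolding Y_def by blast
    then have "card Y < card X" using psubset_card_mono[OF fin] by blast
    moreover have "Y \<subseteq> edges G" using less.prems Y_def by auto
    moreover have "\<forall>x. even (deg_in G Y x)"
    proof
      fix x
      have "deg_in G X x = deg_in G (snd Z) x + deg_in G Y x"
        using XY deg_in_Un[OF finZ _ XY(2)] fin Y_def by auto
      moreover have "even (deg_in G X x)" using less.prems(2) by blast
      ultimately have "even (deg_in G (snd Z) x + deg_in G Y x)" by simp
      then show "even (deg_in G Y x)" using circle_deg_even[OF wf Z(1), of x] by simp
    qed
    moreover have "odd (num_neg G Y)"
    proof -
      have "num_neg G X = num_neg G (snd Z) + num_neg G Y"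
        using XY num_neg_Un[OF finZ _ XY(2)] fin Y_def by auto
      then show ?thesis using less.prems(3) False negative_iff_num_neg[of G Z] by auto
    qed
    ultimately obtain W where "circle G W" "negative G W" "snd W \<subseteq> Y" using less.hyps by blast
    then show ?thesis using Y_def by blast
  qed
qed

text \<open>A is the set of edges traversed an odd number of times by a walk from a to b.\<close>
lemma walk_parity_join:
  assumes wf: "sgraph_wf G" and F: "F \<subseteq> edges G" and w: "(adj_in G F)\<^sup>*\<^sup>* a b"
  shows "\<exists>A\<subseteq>F. \<forall>x. odd (deg_in G A x) \<longleftrightarrow> (a \<noteq> b \<and> (x = a \<or> x = b))"
  using w
proof (induction rule: rtranclp_induct)
  case base then show ?case by (intro exI[of _ "{}"]) simp
next
  case (step b c)
  then obtain A where A: "A \<subseteq> F" "\<forall>x. odd (deg_in G A x) \<longleftrightarrow> (a \<noteq> b \<and> (x = a \<or> x = b))" by blast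
  show ?case
  proof (cases "b = c")
    case True then show ?thesis using A by blast
  next
    case False
    obtain e where e: "e \<in> F" "b \<in> ends G e" "c \<in> ends G e" using step(2) by (auto simp: adj_in_def)
    have "card (ends G e) = 1 \<or> card (ends G e) = 2" using sgraph_wf_edge(2)[OF wf] e F by blast
    then have "card (ends G e) = 2" using e False by (auto simp: card_1_singleton_iff)
    then have "ends G e = {b,c}" using card_2_eqI[of "ends G e" b c] e False by blast
    then have de: "deg_in G {e} x = (if x = b \<or> x = c then 1 else 0)" for x
      using deg_in_singleton_link False by metis
    have finF: "finite F" using F sgraph_wf_finite[OF wf] finite_subset by blast
    have finA: "finite A" using A(1) finF finite_subset by blast
    define A' where "A' = (if e \<in> A then A - {e} else insert e A)"
    have A'F: "A' \<subseteq> F" using A(1) e unfolding A'_def by auto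
    have par: "odd (deg_in G A' x) \<longleftrightarrow> (odd (deg_in G A x) \<noteq> (x = b \<or> x = c))" for x
    proof (cases "e \<in> A")
      case True
      have "deg_in G A x = deg_in G (A - {e}) x + deg_in G {e} x"
        using deg_in_Diff[OF finA, of "A - {e}" G x] True by (simp add: Diff_Diff_Int)
      then show ?thesis using True de[of x] unfolding A'_def by auto
    next
      case False
      have "deg_in G (insert e A) x = deg_in G A x + deg_in G {e} x"
        using deg_in_insert[OF finA False] .
      then show ?thesis using False de[of x] unfolding A'_def by auto
    qed
    have "\<forall>x. odd (deg_in G A' x) \<longleftrightarrow> (a \<noteq> c \<and> (x = a \<or> x = c))"
    proof
      fix x show "odd (deg_in G A' x) \<longleftrightarrow> (a \<noteq> c \<and> (x = a \<or> x = c))"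
        using par[of x] A(2)[rule_format, of x] False by auto
    qed
    then show ?thesis using A'F by blast
  qed
qed

lemma is_path_deg_odd_iff:
  assumes p: "is_path G F vs es" and n: "0 < length es"
  shows "odd (deg_in G (set es) x) \<longleftrightarrow> (x = vs!0 \<or> x = vs!length es)"
proof (cases "x \<in> set vs")
  case False
  have "vs!0 \<in> set vs" "vs!length es \<in> set vs" using is_path_len[OF p] by auto
  then show ?thesis using is_path_deg_out[OF p False] False by auto
next
  case True
  have len: "length vs = Suc (length es)" using is_path_len[OF p] .
  obtain j where j: "j \<le> length es" "vs!j = x" using True len by (metis in_set_conv_nth less_Suc_eq_le)
  have "x = vs!0 \<longleftrightarrow> j = 0" "x = vs!length es \<longleftrightarrow> j = length es"
    using j is_path_dist[OF p] len by (auto simp: nth_eq_iff_index_eq)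
  then show ?thesis using is_path_deg_at[OF p n j(1)] j(2) by auto
qed

text \<open>With A a set of D-edges of odd degree exactly at the two ends of the ear P, both P + A
  and P + (D - A) have all degrees even, and their numbers of negative edges sum to
  2 |P^-| + |D^-|, which is odd.\<close>
lemma negative_even_subgraph_through_ear:
  assumes wf: "sgraph_wf G" and D: "circle G D" and negD: "negative G D"
    and p: "is_path G (edges G) vs es" and n: "0 < length es"
    and w: "vs!0 \<in> fst D" and y: "vs!length es \<in> fst D"
    and disj: "set es \<inter> snd D = {}"
  obtains X where "X \<subseteq> edges G" "X \<subseteq> set es \<union> snd D" "\<not> snd D \<subseteq> X"
    "\<forall>x. even (deg_in G X x)" "odd (num_neg G X)"
proof -
  have wy: "vs!0 \<noteq> vs!length es"
    using is_path_dist[OF p] is_path_len[OF p] n by (simp add: nth_eq_iff_index_eq)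
  have finD: "finite (snd D)" using circle_finite[OF wf D] by simp
  have DE: "snd D \<subseteq> edges G" using circle_edges[OF D] .
  have reach: "(adj_in G (snd D))\<^sup>*\<^sup>* (vs!0) (vs!length es)"
    using D w y by (auto simp: circle_def connected_sub_def)
  obtain A where A: "A \<subseteq> snd D"
    "\<forall>x. odd (deg_in G A x) \<longleftrightarrow> (vs!0 \<noteq> vs!length es \<and> (x = vs!0 \<or> x = vs!length es))"
    using walk_parity_join[OF wf DE reach] by blast
  have Apar: "odd (deg_in G A x) \<longleftrightarrow> (x = vs!0 \<or> x = vs!length es)" for x using A(2) wy by auto
  have Ppar: "odd (deg_in G (set es) x) \<longleftrightarrow> (x = vs!0 \<or> x = vs!length es)" for x
    using is_path_deg_odd_iff[OF p n] .
  have finA: "finite A" using A(1) finD finite_subset by blast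
  have dPA: "set es \<inter> A = {}" "set es \<inter> (snd D - A) = {}" using disj A(1) by auto
  define X1 where "X1 = set es \<union> A"
  define X2 where "X2 = set es \<union> (snd D - A)"
  have ev1: "even (deg_in G X1 x)" for x
  proof -
    have "deg_in G X1 x = deg_in G (set es) x + deg_in G A x"
      unfolding X1_def using deg_in_Un[OF _ finA dPA(1)] by simp
    then show ?thesis using Apar[of x] Ppar[of x] by auto
  qed
  have ev2: "even (deg_in G X2 x)" for x
  proof -
    have "deg_in G X2 x = deg_in G (set es) x + deg_in G (snd D - A) x"
      unfolding X2_def using deg_in_Un[OF _ _ dPA(2)] finD by simp
    moreover have "deg_in G (snd D) x = deg_in G A x + deg_in G (snd D - A) x"
      using deg_in_Diff[OF finD A(1)] .
    ultimately show ?thesis using circle_deg_even[OF wf D, of x] Apar[of x] Ppar[of x] by auto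
  qed
  have "num_neg G X1 + num_neg G X2 = 2 * num_neg G (set es) + num_neg G (snd D)"
  proof -
    have "snd D = A \<union> (snd D - A)" using A(1) by auto
    then have "num_neg G (snd D) = num_neg G A + num_neg G (snd D - A)"
      using num_neg_Un[OF finA, of "snd D - A" G] finD by simp
    moreover have "num_neg G X1 = num_neg G (set es) + num_neg G A"
      unfolding X1_def using num_neg_Un[OF finite_set finA dPA(1)] .
    moreover have "num_neg G X2 = num_neg G (set es) + num_neg G (snd D - A)"
      unfolding X2_def using num_neg_Un[OF finite_set _ dPA(2)] finD by simp
    ultimately show ?thesis by simp
  qed
  moreover have "odd (num_neg G (snd D))" using negD negative_iff_num_neg by blast
  ultimately have "odd (num_neg G X1) \<or> odd (num_neg G X2)" by presburger
  moreover have "\<not> snd D \<subseteq> X1"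
  proof
    assume "snd D \<subseteq> X1"
    then have "A = snd D" using disj A(1) unfolding X1_def by blast
    then show False using Apar[of "vs!0"] circle_deg_even[OF wf D] by simp
  qed
  moreover have "\<not> snd D \<subseteq> X2"
  proof
    assume "snd D \<subseteq> X2"
    then have "A = {}" using disj A(1) unfolding X2_def by blast
    then show False using Apar[of "vs!0"] by simp
  qed
  moreover have "X1 \<subseteq> edges G" "X2 \<subseteq> edges G" "X1 \<subseteq> set es \<union> snd D" "X2 \<subseteq> set es \<union> snd D"
    using is_path_set[OF p] DE A(1) unfolding X1_def X2_def by auto
  ultimately show thesis using that ev1 ev2 by blast
qed

text \<open>An inner vertex of the ear lies off D, so its only edges in P + D are its two ear edges;
  a circle through one of them therefore runs along the whole ear.\<close>
lemma circle_meeting_ear_contains_ear: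
  assumes p: "is_path G F vs es" and D: "circle G D"
    and inner: "\<forall>i. 0 < i \<and> i < length es \<longrightarrow> vs!i \<notin> fst D"
    and Z: "circle G Z" "snd Z \<subseteq> set es \<union> snd D" and hit: "snd Z \<inter> set es \<noteq> {}"
  shows "set es \<subseteq> snd Z"
proof -
  have len: "length vs = Suc (length es)" using is_path_len[OF p] .
  have dist: "distinct vs" using is_path_dist[OF p] .
  have key: "es!(k-1) \<in> snd Z \<longleftrightarrow> es!k \<in> snd Z" if k: "0 < k" "k < length es" for k
  proof -
    define u where "u = vs!k"
    have atu: "e \<in> {es!(k-1), es!k}" if e: "e \<in> snd Z" "u \<in> ends G e" for e
    proof -
      have "e \<notin> snd D" using circle_ends[OF D] e inner k u_def by blast
      then have "e \<in> set es" using e Z(2) by blast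
      then obtain i where i: "i < length es" "es!i = e" by (metis in_set_conv_nth)
      then have "u = vs!i \<or> u = vs!Suc i" using is_path_at[OF p i(1)] e by simp
      then have "i = k \<or> Suc i = k" using dist len i k u_def by (auto simp: nth_eq_iff_index_eq)
      then show ?thesis using i by auto
    qed
    have lk: "card (ends G (es!(k-1))) = 2" "card (ends G (es!k)) = 2"
      using is_path_card2[OF p] k by auto
    have uin: "u \<in> ends G (es!(k-1))" "u \<in> ends G (es!k)"
      using is_path_ends[OF p, of "k-1"] is_path_ends[OF p, of k] k u_def by auto
    have "es!(k-1) \<in> snd Z \<and> es!k \<in> snd Z" if one: "es!(k-1) \<in> snd Z \<or> es!k \<in> snd Z"
    proof -
      have "u \<in> fst Z" using one uin circle_ends[OF Z(1)] by blast
      then have d2: "deg_in G (snd Z) u = 2" using circle_deg[OF Z(1)] by blast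
      have no_loop: "{e\<in>snd Z. ends G e = {u}} = {}" using atu lk by fastforce
      have c2: "card {e\<in>snd Z. u \<in> ends G e \<and> card (ends G e) = 2} = 2"
        using d2 unfolding deg_in_def no_loop by simp
      have sub: "{e\<in>snd Z. u \<in> ends G e \<and> card (ends G e) = 2} \<subseteq> {es!(k-1), es!k} \<inter> snd Z"
        using atu by blast
      show ?thesis
      proof (rule ccontr)
        assume "\<not> ?thesis"
        then obtain f where "{es!(k-1), es!k} \<inter> snd Z \<subseteq> {f}" by blast
        then have "card ({es!(k-1), es!k} \<inter> snd Z) \<le> 1"
          using card_mono[of "{f}"] by fastforce
        moreover have "card {e\<in>snd Z. u \<in> ends G e \<and> card (ends G e) = 2} \<le> card ({es!(k-1), es!k} \<inter> snd Z)"
          using sub by (intro card_mono) auto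
        ultimately show False using c2 by simp
      qed
    qed
    then show ?thesis by blast
  qed
  have all: "es!j \<in> snd Z \<longleftrightarrow> es!0 \<in> snd Z" if "j < length es" for j
    using that by (induction j) (use key[of "Suc _"] in auto)
  obtain i where "i < length es" "es!i \<in> snd Z" using hit by (auto simp: in_set_conv_nth)
  then show ?thesis using all by (auto simp: in_set_conv_nth)
qed

lemma negative_circle_through_ear:
  assumes wf: "sgraph_wf G" and D: "circle G D" and negD: "negative G D"
    and p: "is_path G (edges G) vs es" and n: "0 < length es"
    and w: "vs!0 \<in> fst D" and y: "vs!length es \<in> fst D"
    and disj: "set es \<inter> snd D = {}"
    and inner: "\<forall>i. 0 < i \<and> i < length es \<longrightarrow> vs!i \<notin> fst D"
  shows "\<exists>Z. circle G Z \<and> negative G Z \<and> set es \<subseteq> snd Z \<and> snd Z \<subseteq> set es \<union> snd D"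
proof -
  obtain X where X: "X \<subseteq> edges G" "X \<subseteq> set es \<union> snd D" "\<not> snd D \<subseteq> X"
    "\<forall>x. even (deg_in G X x)" "odd (num_neg G X)"
    using negative_even_subgraph_through_ear[OF wf D negD p n w y disj] .
  obtain Z where Z: "circle G Z" "negative G Z" "snd Z \<subseteq> X"
    using even_degree_has_negative_circle[OF wf X(1,4,5)] by blast
  have "snd Z \<inter> set es \<noteq> {}"
  proof
    assume "snd Z \<inter> set es = {}"
    then have "snd Z \<subseteq> snd D" using Z(3) X(2) by blast
    then have "Z = D" using circle_eq_if_edges_subset[OF wf Z(1) D] by blast
    then show False using X(3) Z(3) by blast
  qed
  then have "set es \<subseteq> snd Z"
    using circle_meeting_ear_contains_ear[OF p D inner Z(1)] Z(3) X(2) by blast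
  then show ?thesis using Z X(2) by blast
qed

section \<open>Negative circles in inseparable graphs\<close>

lemma inseparable_is_sub: "inseparable G H \<Longrightarrow> is_sub G H" by (simp add: inseparable_def)
lemma inseparable_reach: "inseparable G H \<Longrightarrow> x \<in> fst H \<Longrightarrow> y \<in> fst H \<Longrightarrow> (adj_in G (snd H))\<^sup>*\<^sup>* x y"
  by (simp add: inseparable_def connected_sub_def)
lemma inseparable_no_cutpoint: "inseparable G H \<Longrightarrow> \<not> has_cutpoint G H" by (simp add: inseparable_def)

lemma inseparable_loop:
  assumes H: "inseparable G H" and l: "l \<in> snd H" "ends G l = {x}" and e: "e \<in> snd H"
  shows "e = l"
proof (rule ccontr)
  assume ne: "e \<noteq> l"
  have "has_cutpoint G H"
    unfolding has_cutpoint_def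
    by (rule exI[of _ x], rule exI[of _ "{l}"], rule exI[of _ "snd H - {l}"]) (use l e ne in auto)
  then show False using inseparable_no_cutpoint[OF H] by blast
qed

lemma rtranclp_first_step:
  assumes "R\<^sup>*\<^sup>* x y" "x \<noteq> y" shows "\<exists>z. R x z"
  using assms by (induction rule: converse_rtranclp_induct) auto

lemma inseparable_edge_at:
  assumes H: "inseparable G H" "x \<in> fst H" "y \<in> fst H" "x \<noteq> y"
  shows "\<exists>e\<in>snd H. x \<in> ends G e"
proof -
  obtain z where "adj_in G (snd H) x z" using rtranclp_first_step[OF inseparable_reach[OF H(1-3)] H(4)] by blast
  then show ?thesis by (auto simp: adj_in_def)
qed

text \<open>Otherwise the edges meeting the component of x in H - w and the remaining edges
  would split H at w.\<close>
lemma inseparable_reach_avoiding: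
  assumes wf: "sgraph_wf G" and H: "inseparable G H"
    and x: "x \<in> fst H" "x \<noteq> w" and y: "y \<in> fst H" "y \<noteq> w"
  shows "(adj_in G {e\<in>snd H. w \<notin> ends G e})\<^sup>*\<^sup>* x y"
proof (rule ccontr)
  assume nr: "\<not> ?thesis"
  define R where "R = adj_in G {e\<in>snd H. w \<notin> ends G e}"
  define K where "K = {z. R\<^sup>*\<^sup>* x z}"
  have yK: "y \<notin> K" using nr unfolding K_def R_def by simp
  have xy: "x \<noteq> y" using nr by auto
  have Kw: "k \<noteq> w" if "k \<in> K" for k
  proof -
    have "R\<^sup>*\<^sup>* x k" using that K_def by simp
    then show ?thesis
    proof (induction rule: rtranclp_induct)
      case base then show ?case using x by simp
    next
      case (step a b) then show ?case unfolding R_def adj_in_def by auto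
    qed
  qed
  have Kstep: "u \<in> K" if "k \<in> K" "e \<in> snd H" "w \<notin> ends G e" "k \<in> ends G e" "u \<in> ends G e" for k e u
  proof -
    have "R k u" unfolding R_def adj_in_def using that by blast
    then show ?thesis using that(1) unfolding K_def by simp
  qed
  have card: "card (ends G e) = 1 \<or> card (ends G e) = 2" if "e \<in> snd H" for e
    using sgraph_wf_edge(2)[OF wf] inseparable_is_sub[OF H] that by (auto simp: is_sub_def)
  define F1 where "F1 = {e\<in>snd H. \<exists>k\<in>K. k \<in> ends G e}"
  define F2 where "F2 = snd H - F1"
  have xK: "x \<in> K" unfolding K_def by simp
  obtain ex where ex: "ex \<in> snd H" "x \<in> ends G ex" using inseparable_edge_at[OF H x(1) y(1) xy] by blast
  obtain ey where ey: "ey \<in> snd H" "y \<in> ends G ey" using inseparable_edge_at[OF H y(1) x(1)] xy by metis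
  have "ex \<in> F1" using ex xK unfolding F1_def by blast
  have "ey \<notin> F1"
  proof
    assume "ey \<in> F1"
    then obtain k where k: "k \<in> K" "k \<in> ends G ey" unfolding F1_def by blast
    show False
    proof (cases "w \<in> ends G ey")
      case False then show False using Kstep[OF k(1) ey(1) False k(2) ey(2)] yK by blast
    next
      case True
      have "y = k" using card_le_2_eq_elem[OF card[OF ey(1)] True k(2) ey(2) Kw[OF k(1)] y(2)] .
      then show False using k yK by simp
    qed
  qed
  then have "ey \<in> F2" using ey unfolding F2_def by blast
  have inter: "(\<Union>(ends G ` F1)) \<inter> (\<Union>(ends G ` F2)) \<subseteq> {w}"
  proof
    fix z assume "z \<in> (\<Union>(ends G ` F1)) \<inter> (\<Union>(ends G ` F2))"
    then obtain e1 e2 where e1: "e1 \<in> F1" "z \<in> ends G e1" and e2: "e2 \<in> F2" "z \<in> ends G e2" by blast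
    obtain k where k: "k \<in> K" "k \<in> ends G e1" "e1 \<in> snd H" using e1 unfolding F1_def by blast
    have zK: "z \<notin> K" using e2 unfolding F2_def F1_def by blast
    show "z \<in> {w}"
    proof (rule ccontr)
      assume "z \<notin> {w}"
      then have zw: "z \<noteq> w" by simp
      show False
      proof (cases "w \<in> ends G e1")
        case False then show False using Kstep[OF k(1) k(3) False k(2) e1(2)] zK by blast
      next
        case True
        have "z = k" using card_le_2_eq_elem[OF card[OF k(3)] True k(2) e1(2) Kw[OF k(1)] zw] .
        then show False using k zK by simp
      qed
    qed
  qed
  have "has_cutpoint G H"
    unfolding has_cutpoint_def
    by (rule exI[of _ w], rule exI[of _ F1], rule exI[of _ F2])
       (use inter \<open>ex \<in> F1\<close> \<open>ey \<in> F2\<close> in \<open>auto simp: F2_def F1_def\<close>)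
  then show False using inseparable_no_cutpoint[OF H] by blast
qed

lemma circle_sub_leI:
  assumes "circle G Z" "snd Z \<subseteq> snd H" "is_sub G H" shows "sub_le Z H"
  using assms circle_verts_eq[OF assms(1)] unfolding sub_le_def is_sub_def by blast

lemma is_path_first_hit:
  assumes p: "is_path G F vs es" and start: "vs!0 \<notin> S" and stop: "vs!length es \<in> S"
  obtains vs' es' where "is_path G F vs' es'" "0 < length es'" "vs'!0 = vs!0" "vs'!length es' \<in> S"
    "\<forall>i<length es'. vs'!i \<notin> S" "set es' \<subseteq> set es"
proof -
  define k where "k = (LEAST k. vs!k \<in> S)"
  have kle: "k \<le> length es" unfolding k_def using stop by (rule Least_le)
  have kS: "vs!k \<in> S" unfolding k_def using stop by (rule LeastI)
  have kmin: "vs!i \<notin> S" if "i < k" for i using not_less_Least[of i "\<lambda>k. vs!k \<in> S"] that k_def by blast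
  have "0 < k" using kS start by (cases k) auto
  then show thesis
    using that[OF is_path_take[OF p kle]] kle kS kmin by (auto dest: in_set_takeD)
qed

lemma inseparable_path_avoiding:
  assumes wf: "sgraph_wf G" and H: "inseparable G H"
    and x: "x \<in> fst H" "x \<noteq> w" and y: "y \<in> fst H" "y \<noteq> w"
  obtains vs es where "is_path G {e\<in>snd H. w \<notin> ends G e} vs es" "vs!0 = x" "vs!length es = y"
proof -
  have "\<forall>e\<in>{e\<in>snd H. w \<notin> ends G e}. card (ends G e) = 1 \<or> card (ends G e) = 2"
    using sgraph_wf_edge(2)[OF wf] inseparable_is_sub[OF H] by (auto simp: is_sub_def)
  then show thesis
    using rtranclp_adj_in_path[OF inseparable_reach_avoiding[OF wf H x y]] that by blast
qed

text \<open>The ear starts with f and follows a path from u to D that avoids z, which exists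
  because z is not a cutpoint of H; it is cut off at its first vertex on D.\<close>
lemma inseparable_ear:
  assumes wf: "sgraph_wf G" and H: "inseparable G H" and D: "circle G D" and DH: "sub_le D H"
    and z: "z \<in> fst D" and f: "f \<in> snd H" "f \<notin> snd D" "ends G f = {z,u}" "u \<noteq> z"
  shows "\<exists>vs es. is_path G (edges G) vs es \<and> 0 < length es \<and> vs!0 = z \<and> vs!length es \<in> fst D \<and>
     set es \<inter> snd D = {} \<and> (\<forall>i. 0 < i \<and> i < length es \<longrightarrow> vs!i \<notin> fst D) \<and> set es \<subseteq> snd H \<and> f \<in> set es"
proof -
  have Hs: "is_sub G H" using inseparable_is_sub[OF H] .
  have fE: "f \<in> edges G" using f Hs by (auto simp: is_sub_def)
  show ?thesis
  proof (cases "u \<in> fst D")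
    case True
    have "is_path G (edges G) [z,u] [f]" using f fE by (auto simp: is_path_def)
    then show ?thesis using True f by (intro exI[of _ "[z,u]"] exI[of _ "[f]"]) auto
  next
    case False
    obtain e0 where e0: "e0 \<in> snd D" "z \<in> ends G e0" using circle_vertex_edge[OF D z] by blast
    have e0H: "e0 \<in> snd H" using e0 DH by (auto simp: sub_le_def)
    have "\<not> (\<exists>a. ends G e0 = {a})" using inseparable_loop[OF H e0H _ f(1)] f(2) e0(1) by blast
    moreover have "e0 \<in> edges G" using Hs e0H by (auto simp: is_sub_def)
    ultimately have "card (ends G e0) = 2"
      using sgraph_wf_edge(2)[OF wf] by (auto simp: card_1_singleton_iff)
    then obtain y where y: "ends G e0 = {z, y}" "y \<noteq> z" using card_2_obtain_other e0(2) by metis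
    have yD: "y \<in> fst D" using circle_ends[OF D e0(1)] y(1) by blast
    have uH: "u \<in> fst H" "y \<in> fst H" using f yD DH Hs by (auto simp: is_sub_def sub_le_def)
    define F' where "F' = {e\<in>snd H. z \<notin> ends G e}"
    obtain vs0 es0 where p0: "is_path G F' vs0 es0" "vs0!0 = u" "vs0!length es0 = y"
      using inseparable_path_avoiding[OF wf H uH(1) f(4) uH(2) y(2)] unfolding F'_def by blast
    obtain vs es where p: "is_path G F' vs es" "0 < length es" "vs!0 = u" "vs!length es \<in> fst D"
      and inner: "\<forall>i<length es. vs!i \<notin> fst D" and sub: "set es \<subseteq> set es0"
      using is_path_first_hit[OF p0(1), of "fst D"] p0(2,3) False yD by metis
    have esF': "set es \<subseteq> F'" using is_path_set[OF p(1)] .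
    have z_off: "z \<notin> set vs" using is_path_vs_ends[OF p(1) _ p(2)] esF' unfolding F'_def by blast
    have F'E: "F' \<subseteq> edges G" using Hs unfolding F'_def by (auto simp: is_sub_def)
    have "ends G f = {z, vs!0}" using f(3) p(3) by simp
    then have path: "is_path G (edges G) (z#vs) (f#es)"
      using is_path_cons[OF is_path_mono[OF p(1) F'E] z_off _ fE] by blast
    have "e \<notin> snd D" if e: "e \<in> set es" for e
    proof -
      obtain i where i: "i < length es" "es!i = e" using e by (metis in_set_conv_nth)
      then have "vs!i \<in> ends G e" using is_path_ends[OF p(1) i(1)] by auto
      then show ?thesis using inner i(1) circle_ends[OF D] by blast
    qed
    then have "set (f#es) \<inter> snd D = {}" using f(2) by auto
    moreover have "\<forall>i. 0 < i \<and> i < length (f#es) \<longrightarrow> (z#vs)!i \<notin> fst D"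
      using inner by (auto simp: nth_Cons split: nat.split)
    moreover have "set (f#es) \<subseteq> snd H" using f(1) esF' unfolding F'_def by auto
    ultimately show ?thesis using path p(4) by (intro exI[of _ "z#vs"] exI[of _ "f#es"]) auto
  qed
qed

lemma inseparable_negative_circle_through_link:
  assumes wf: "sgraph_wf G" and H: "inseparable G H" and D: "circle G D" and nD: "negative G D"
    and DH: "sub_le D H" and z: "z \<in> fst D" and f: "f \<in> snd H" "f \<notin> snd D" "z \<in> ends G f"
    and c2: "card (ends G f) = 2"
  shows "\<exists>Z. circle G Z \<and> negative G Z \<and> sub_le Z H \<and> f \<in> snd Z"
proof -
  obtain u where u: "ends G f = {z,u}" "u \<noteq> z" using card_2_obtain_other[OF c2 f(3)] .
  obtain vs es where p: "is_path G (edges G) vs es" "0 < length es" "vs!0 = z" "vs!length es \<in> fst D"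
     "set es \<inter> snd D = {}" "\<forall>i. 0 < i \<and> i < length es \<longrightarrow> vs!i \<notin> fst D" "set es \<subseteq> snd H" "f \<in> set es"
    using inseparable_ear[OF wf H D DH z f(1,2) u] by blast
  obtain Z where Z: "circle G Z" "negative G Z" "set es \<subseteq> snd Z" "snd Z \<subseteq> set es \<union> snd D"
    using negative_circle_through_ear[OF wf D nD p(1,2)] p z by blast
  have "snd Z \<subseteq> snd H" using Z(4) p(7) DH by (auto simp: sub_le_def)
  then have "sub_le Z H" using circle_sub_leI[OF Z(1) _ inseparable_is_sub[OF H]] by blast
  then show ?thesis using Z p(8) by blast
qed

text \<open>Walk from the negative circle to x inside H; whenever the walk leaves the current
  negative circle along a link, an ear through that link gives a new one.\<close>
lemma inseparable_negative_circle_through_vertex: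
  assumes wf: "sgraph_wf G" and H: "inseparable G H" and D: "circle G D" and nD: "negative G D"
    and DH: "sub_le D H" and x: "x \<in> fst H"
  shows "\<exists>Z. circle G Z \<and> negative G Z \<and> sub_le Z H \<and> x \<in> fst Z"
proof -
  obtain d where d: "d \<in> fst D" using circle_nonempty[OF D] by blast
  have dH: "d \<in> fst H" using d DH by (auto simp: sub_le_def)
  have "(adj_in G (snd H))\<^sup>*\<^sup>* d x" using inseparable_reach[OF H dH x] .
  then show ?thesis
  proof (induction rule: rtranclp_induct)
    case base then show ?case using D nD DH d by blast
  next
    case (step y u)
    then obtain Z where Z: "circle G Z" "negative G Z" "sub_le Z H" "y \<in> fst Z" by blast
    obtain f where f: "f \<in> snd H" "y \<in> ends G f" "u \<in> ends G f" using step(2) by (auto simp: adj_in_def)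
    show ?case
    proof (cases "u \<in> fst Z")
      case True then show ?thesis using Z by blast
    next
      case False
      have fZ: "f \<notin> snd Z" using False f circle_ends[OF Z(1)] by blast
      have yu: "y \<noteq> u" using False Z by blast
      have "card (ends G f) = 1 \<or> card (ends G f) = 2"
        using sgraph_wf_edge(2)[OF wf] inseparable_is_sub[OF H] f by (auto simp: is_sub_def)
      then have c2: "card (ends G f) = 2" using f yu by (auto simp: card_1_singleton_iff)
      obtain W where W: "circle G W" "negative G W" "sub_le W H" "f \<in> snd W"
        using inseparable_negative_circle_through_link[OF wf H Z(1,2,3,4) f(1) fZ f(2) c2] by blast
      have "u \<in> fst W" using circle_ends[OF W(1) W(4)] f by blast
      then show ?thesis using W by blast
    qed
  qed
qed

section \<open>Blocks\<close>

lemma restr_simps[simp]: "ends (restr G B) = ends G" "neg (restr G B) = neg G"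
  "verts (restr G B) = fst B" "edges (restr G B) = snd B"
  by (auto simp: restr_def)

lemma deg_in_restr[simp]: "deg_in (restr G B) = deg_in G"
  by (rule ext, rule ext) (simp add: deg_in_def)
lemma adj_in_restr[simp]: "adj_in (restr G B) = adj_in G"
  by (intro ext) (simp add: adj_in_def)
lemma connected_restr[simp]: "connected_sub (restr G B) = connected_sub G"
  by (intro ext) (simp add: connected_sub_def)
lemma negative_restr[simp]: "negative (restr G B) = negative G"
  by (intro ext) (simp add: negative_def)

lemma circle_restr_iff:
  assumes "is_sub G B"
  shows "circle (restr G B) D \<longleftrightarrow> circle G D \<and> sub_le D B"
  using assms unfolding circle_def is_sub_def sub_le_def by auto

lemma unbalanced_restr_iff:
  assumes "is_sub G B"
  shows "unbalanced (restr G B) \<longleftrightarrow> (\<exists>D. circle G D \<and> negative G D \<and> sub_le D B)"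
  unfolding unbalanced_def using circle_restr_iff[OF assms] by auto

lemma odd_degree_not_unique:
  assumes "finite F" "finite V" "\<forall>e\<in>F. ends G e \<subseteq> V \<and> (card (ends G e) = 1 \<or> card (ends G e) = 2)"
    and x: "x \<in> V" "odd (deg_in G F x)" and others: "\<forall>y\<in>V - {x}. even (deg_in G F y)"
  shows False
proof -
  have "(\<Sum>y\<in>V. deg_in G F y) = deg_in G F x + (\<Sum>y\<in>V - {x}. deg_in G F y)"
    using sum.remove[OF assms(2) x(1)] .
  moreover have "even (\<Sum>y\<in>V - {x}. deg_in G F y)" using others by (auto intro: dvd_sum)
  ultimately have "even (deg_in G F x)"
    using sum_deg_in_eq_twice_card[OF assms(1-3)] by (metis dvd_add_left_iff dvd_triv_left)
  then show False using x(2) by simp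
qed

lemma connected_edge_partition_meet:
  assumes H: "is_sub G H" "connected_sub G H" and F: "F1 \<union> F2 = snd H"
    and e1: "e1 \<in> F1" "a \<in> ends G e1" and e2: "e2 \<in> F2" "b \<in> ends G e2"
  shows "\<Union>(ends G ` F1) \<inter> \<Union>(ends G ` F2) \<noteq> {}"
proof
  assume disj: "\<Union>(ends G ` F1) \<inter> \<Union>(ends G ` F2) = {}"
  have "a \<in> fst H" "b \<in> fst H" using H(1) F e1 e2 by (auto simp: is_sub_def)
  then have "(adj_in G (snd H))\<^sup>*\<^sup>* a b" using H(2) by (auto simp: connected_sub_def)
  then have "b \<in> \<Union>(ends G ` F1)"
  proof (induction rule: rtranclp_induct)
    case base then show ?case using e1 by blast
  next
    case (step z z')
    then obtain e where e: "e \<in> snd H" "z \<in> ends G e" "z' \<in> ends G e" by (auto simp: adj_in_def)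
    then show ?case using step.IH disj F by blast
  qed
  then show False using disj e2 by blast
qed

text \<open>At a cutpoint x of a circle, each side of the split uses exactly one of the two edges
  at x; so the edges on one side have odd degree at x only, which the handshake lemma forbids.\<close>
lemma circle_inseparable:
  assumes wf: "sgraph_wf G" and C: "circle G C"
  shows "inseparable G C"
proof -
  have "\<not> has_cutpoint G C"
  proof
    assume "has_cutpoint G C"
    then obtain x F1 F2 where F: "F1 \<union> F2 = snd C" "F1 \<inter> F2 = {}" "F1 \<noteq> {}" "F2 \<noteq> {}"
      "\<Union>(ends G ` F1) \<inter> \<Union>(ends G ` F2) \<subseteq> {x}"
      unfolding has_cutpoint_def by (elim exE conjE) (rule that; assumption)
    define V1 where "V1 = \<Union>(ends G ` F1)"
    define V2 where "V2 = \<Union>(ends G ` F2)"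
    have finC: "finite (snd C)" "finite (fst C)" using circle_finite[OF wf C] by auto
    have fin: "finite F1" "finite F2" using F(1) finC(1) by (auto intro: finite_subset)
    have cards: "card (ends G e) = 1 \<or> card (ends G e) = 2" if "e \<in> snd C" for e
      using sgraph_wf_edge(2)[OF wf] circle_edges[OF C] that by blast
    have V1C: "V1 \<subseteq> fst C" using F(1) circle_ends[OF C] unfolding V1_def by blast
    have has_end: "\<exists>a. a \<in> ends G e" if "e \<in> snd C" for e
      using sgraph_wf_ends_nonempty[OF wf] circle_edges[OF C] that by blast
    obtain e1 e2 where e12: "e1 \<in> F1" "e2 \<in> F2" using F(3,4) by blast
    then obtain a b where "a \<in> ends G e1" "b \<in> ends G e2" using has_end F(1) by blast
    then have "V1 \<inter> V2 \<noteq> {}" unfolding V1_def V2_def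
      using connected_edge_partition_meet[OF circle_is_sub[OF C] _ F(1)] C e12
      by (simp add: circle_def)
    then have x12: "V1 \<inter> V2 = {x}" using F(5) unfolding V1_def V2_def by blast
    have degC: "deg_in G (snd C) y = deg_in G F1 y + deg_in G F2 y" for y
      using deg_in_Un[OF fin F(2)] F(1) by simp
    have xC: "x \<in> fst C" using x12 V1C by blast
    have ge1: "deg_in G F' x \<ge> 1" if sub: "F' \<subseteq> snd C" "finite F'" "x \<in> \<Union>(ends G ` F')" for F'
    proof -
      obtain e where e: "e \<in> F'" "x \<in> ends G e" using sub(3) by blast
      show ?thesis using deg_in_ge_1[OF sub(2) e cards[OF subsetD[OF sub(1) e(1)]]] .
    qed
    have "x \<in> V1" "x \<in> V2" "F1 \<subseteq> snd C" "F2 \<subseteq> snd C" using x12 F(1) by auto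
    then have "deg_in G F1 x \<ge> 1" "deg_in G F2 x \<ge> 1"
      using ge1 fin unfolding V1_def V2_def by auto
    then have dx: "deg_in G F1 x = 1" using degC[of x] circle_deg[OF C xC] by simp
    have others: "\<forall>y\<in>fst C - {x}. even (deg_in G F1 y)"
    proof
      fix y assume y: "y \<in> fst C - {x}"
      show "even (deg_in G F1 y)"
      proof (cases "y \<in> V1")
        case True
        then have "deg_in G F2 y = 0" using x12 y deg_in_eq_0[of F2 y G] unfolding V2_def by blast
        then show ?thesis using degC[of y] circle_deg[OF C] y by simp
      next
        case False
        then show ?thesis using deg_in_eq_0[of F1 y G] unfolding V1_def by simp
      qed
    qed
    have "\<forall>e\<in>F1. ends G e \<subseteq> fst C \<and> (card (ends G e) = 1 \<or> card (ends G e) = 2)"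
      using F(1) circle_ends[OF C] cards by blast
    from odd_degree_not_unique[OF fin(1) finC(2) this xC _ others] dx show False by simp
  qed
  then show ?thesis using C unfolding circle_def inseparable_def by blast
qed

lemma inseparable_edges_one_side:
  assumes H: "inseparable G H" and F: "snd H \<subseteq> F1 \<union> F2" "F1 \<inter> F2 = {}"
    "\<Union>(ends G ` F1) \<inter> \<Union>(ends G ` F2) \<subseteq> {x}"
  shows "snd H \<subseteq> F1 \<or> snd H \<subseteq> F2"
proof (rule ccontr)
  assume "\<not> ?thesis"
  then have n: "F1 \<inter> snd H \<noteq> {}" "F2 \<inter> snd H \<noteq> {}" using F(1) by blast+
  have "F1 \<inter> snd H \<union> F2 \<inter> snd H = snd H" "F1 \<inter> snd H \<inter> (F2 \<inter> snd H) = {}"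
    "\<Union>(ends G ` (F1 \<inter> snd H)) \<inter> \<Union>(ends G ` (F2 \<inter> snd H)) \<subseteq> {x}"
    using F by blast+
  then have "has_cutpoint G H" unfolding has_cutpoint_def
    using n by (intro exI[of _ x] exI[of _ "F1 \<inter> snd H"] exI[of _ "F2 \<inter> snd H"] conjI)
  then show False using inseparable_no_cutpoint[OF H] by blast
qed

lemma connected_sub_Un:
  assumes H1: "connected_sub G H1" and H2: "connected_sub G H2" and c: "c \<in> fst H1" "c \<in> fst H2"
  shows "connected_sub G (fst H1 \<union> fst H2, snd H1 \<union> snd H2)"
proof -
  have reach_c: "(adj_in G (snd H1 \<union> snd H2))\<^sup>*\<^sup>* x c" if x: "x \<in> fst H1 \<union> fst H2" for x
  proof (cases "x \<in> fst H1")
    case True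
    then have "(adj_in G (snd H1))\<^sup>*\<^sup>* x c" using H1 c(1) by (auto simp: connected_sub_def)
    then show ?thesis by (rule adj_in_rtranclp_mono) auto
  next
    case False
    then have "(adj_in G (snd H2))\<^sup>*\<^sup>* x c" using x H2 c(2) by (auto simp: connected_sub_def)
    then show ?thesis by (rule adj_in_rtranclp_mono) auto
  qed
  show ?thesis unfolding connected_sub_def
  proof (intro conjI ballI)
    show "fst (fst H1 \<union> fst H2, snd H1 \<union> snd H2) \<noteq> {}" using c by auto
    fix x y assume "x \<in> fst (fst H1 \<union> fst H2, snd H1 \<union> snd H2)" "y \<in> fst (fst H1 \<union> fst H2, snd H1 \<union> snd H2)"
    then show "(adj_in G (snd (fst H1 \<union> fst H2, snd H1 \<union> snd H2)))\<^sup>*\<^sup>* x y"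
      using rtranclp_trans[OF reach_c adj_in_rtranclp_sym[OF reach_c]] by simp
  qed
qed

lemma inseparable_Un:
  assumes wf: "sgraph_wf G" and H1: "inseparable G H1" and H2: "inseparable G H2"
    and e: "e \<in> snd H1" "e \<in> snd H2"
  shows "inseparable G (fst H1 \<union> fst H2, snd H1 \<union> snd H2)"
proof -
  define U where "U = (fst H1 \<union> fst H2, snd H1 \<union> snd H2)"
  have S1: "is_sub G H1" and S2: "is_sub G H2"
    using inseparable_is_sub[OF H1] inseparable_is_sub[OF H2] .
  then have issub: "is_sub G U" unfolding U_def is_sub_def by auto
  have eE: "e \<in> edges G" using S1 e by (auto simp: is_sub_def)
  obtain c where c: "c \<in> ends G e" using sgraph_wf_ends_nonempty[OF wf eE] by blast
  have "c \<in> fst H1" "c \<in> fst H2" using S1 S2 e c by (auto simp: is_sub_def)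
  moreover have "connected_sub G H1" "connected_sub G H2"
    using H1 H2 by (simp_all add: inseparable_def)
  ultimately have conn: "connected_sub G U" unfolding U_def by (intro connected_sub_Un)
  have nocut: "\<not> has_cutpoint G U"
  proof
    assume "has_cutpoint G U"
    then obtain x F1 F2 where F: "F1 \<union> F2 = snd U" "F1 \<inter> F2 = {}" "F1 \<noteq> {}" "F2 \<noteq> {}"
      "\<Union>(ends G ` F1) \<inter> \<Union>(ends G ` F2) \<subseteq> {x}"
      unfolding has_cutpoint_def by (elim exE conjE) (rule that; assumption)
    have "snd H1 \<subseteq> F1 \<or> snd H1 \<subseteq> F2" "snd H2 \<subseteq> F1 \<or> snd H2 \<subseteq> F2"
      using inseparable_edges_one_side[OF H1 _ F(2,5)] inseparable_edges_one_side[OF H2 _ F(2,5)] F(1)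
      unfolding U_def by auto
    then consider "snd U \<subseteq> F1" | "snd U \<subseteq> F2" using e F(2) unfolding U_def by auto
    then show False
    proof cases
      case 1
      then have "F2 \<subseteq> F1" using F(1) by blast
      then show False using F(2,4) by blast
    next
      case 2
      then have "F1 \<subseteq> F2" using F(1) by blast
      then show False using F(2,3) by blast
    qed
  qed
  have "inseparable G U" unfolding inseparable_def using issub conn nocut by blast
  then show ?thesis unfolding U_def .
qed

lemma block_inseparable: "block G B \<Longrightarrow> inseparable G B" by (simp add: block_def)

lemma block_eq_if_common_edge:
  assumes wf: "sgraph_wf G" and B1: "block G B1" and B2: "block G B2"
    and e: "e \<in> snd B1" "e \<in> snd B2"
  shows "B1 = B2"
proof -
  define U where "U = (fst B1 \<union> fst B2, snd B1 \<union> snd B2)"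
  have U: "inseparable G U" using inseparable_Un[OF wf block_inseparable[OF B1] block_inseparable[OF B2] e] U_def by simp
  have "sub_le B1 U" "sub_le B2 U" unfolding U_def sub_le_def by auto
  then have "U = B1" "U = B2" using B1 B2 U unfolding block_def by blast+
  then show ?thesis by simp
qed

lemma inseparable_sub_le_block:
  assumes wf: "sgraph_wf G" and H: "inseparable G H"
  shows "\<exists>B. block G B \<and> sub_le H B"
proof -
  define f where "f H' = card (fst H') + card (snd H')" for H' :: "('a,'b) subg"
  define P where "P m \<longleftrightarrow> (\<exists>H'. inseparable G H' \<and> sub_le H H' \<and> f H' = m)" for m
  have fv: "finite (verts G)" "finite (edges G)" using sgraph_wf_finite[OF wf] by auto
  have bnd: "f H' \<le> card (verts G) + card (edges G)" if "inseparable G H'" for H'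
  proof -
    have "fst H' \<subseteq> verts G" "snd H' \<subseteq> edges G" using inseparable_is_sub[OF that] by (auto simp: is_sub_def)
    then show ?thesis unfolding f_def using card_mono fv by (metis add_mono)
  qed
  have P0: "P (f H)" unfolding P_def using H by (intro exI[of _ H]) (auto simp: sub_le_def)
  have bb: "\<forall>m. P m \<longrightarrow> m \<le> card (verts G) + card (edges G)" unfolding P_def using bnd by blast
  obtain m where m: "P m" "\<forall>k. P k \<longrightarrow> k \<le> m" using Nat.ex_has_greatest_nat[of P "f H", OF P0 bb] by blast
  obtain B where B: "inseparable G B" "sub_le H B" "f B = m" using m(1) unfolding P_def by blast
  have "block G B"
    unfolding block_def
  proof (intro conjI allI impI)
    show "inseparable G B" using B(1) .
    fix H' assume H': "inseparable G H' \<and> sub_le B H'"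
    then have "P (f H')" unfolding P_def using B(2) by (intro exI[of _ H']) (auto simp: sub_le_def)
    then have le: "f H' \<le> f B" using m(2) B(3) by blast
    have s: "fst B \<subseteq> fst H'" "snd B \<subseteq> snd H'" using H' by (auto simp: sub_le_def)
    have fin: "finite (fst H')" "finite (snd H')" using inseparable_is_sub[of G H'] H' fv
      by (auto simp: is_sub_def intro: finite_subset)
    have c1: "card (fst B) \<le> card (fst H')" "card (snd B) \<le> card (snd H')"
      using card_mono[OF fin(1) s(1)] card_mono[OF fin(2) s(2)] by auto
    then have "card (fst B) = card (fst H')" "card (snd B) = card (snd H')" using le unfolding f_def by auto
    then have "fst B = fst H'" "snd B = snd H'" using card_subset_eq fin s by metis+
    then show "H' = B" by (simp add: prod_eq_iff)
  qed
  then show ?thesis using B(2) by blast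
qed

section \<open>Suppression of a vertex of degree two\<close>

lemma suppress_simps[simp]:
  "verts (suppress G B v e1 e2) = fst B - {v}"
  "edges (suppress G B v e1 e2) = Some ` (snd B - {e1, e2}) \<union> {None}"
  "ends (suppress G B v e1 e2) (Some e) = ends G e"
  "ends (suppress G B v e1 e2) None = (ends G e1 \<union> ends G e2) - {v}"
  "neg (suppress G B v e1 e2) (Some e) = neg G e"
  "neg (suppress G B v e1 e2) None = (neg G e1 \<noteq> neg G e2)"
  by (auto simp: suppress_def)

lemma deg_in_suppress_Some: "deg_in (suppress G B v e1 e2) (Some ` S) x = deg_in G S x"
  unfolding deg_in_def Compr_image_eq by (simp add: card_image)

lemma num_neg_suppress_Some: "num_neg (suppress G B v e1 e2) (Some ` S) = num_neg G S"
  unfolding num_neg_def Compr_image_eq by (simp add: card_image)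

lemma neg_vertex_batteryD:
  assumes "neg_vertex_battery G v C"
  shows "circle G C" "v \<in> fst C" "negative G C"
    and "circle G D \<Longrightarrow> v \<in> fst D \<Longrightarrow> negative G D \<Longrightarrow> D = C"
  using assms unfolding neg_vertex_battery_def by blast+

lemma neg_vertex_batteryI:
  assumes "circle G C" "v \<in> fst C" "negative G C"
    and "\<And>D. circle G D \<Longrightarrow> v \<in> fst D \<Longrightarrow> negative G D \<Longrightarrow> D = C"
  shows "neg_vertex_battery G v C"
  using assms unfolding neg_vertex_battery_def by blast

locale suppression =
  fixes G :: "('v,'e) sgraph" and B :: "('v,'e) subg" and v :: 'v and e1 e2 :: 'e and a b :: 'v
  assumes wf: "sgraph_wf G" and Bs: "is_sub G B"
    and at: "{e\<in>snd B. v \<in> ends G e} = {e1, e2}" and e12: "e1 \<noteq> e2"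
    and l1: "ends G e1 = {v, a}" "a \<noteq> v" and l2: "ends G e2 = {v, b}" "b \<noteq> v"
begin

abbreviation "G' \<equiv> suppress G B v e1 e2"

lemma ends_new_edge: "ends G' None = {a, b}"
  using l1 l2 by auto

lemma e12_in_B: "e1 \<in> snd B" "e2 \<in> snd B" using at by auto

lemma B_finite: "finite (snd B)" "finite (fst B)"
  using Bs sgraph_wf_finite[OF wf] by (auto simp: is_sub_def intro: finite_subset)

lemma v_notin_other_ends: "e \<in> snd B \<Longrightarrow> e \<noteq> e1 \<Longrightarrow> e \<noteq> e2 \<Longrightarrow> v \<notin> ends G e"
  using at by blast

lemma deg_e1: "x \<noteq> v \<Longrightarrow> deg_in G {e1} x = (if x = a then 1 else 0)"
  using l1 by (auto simp: deg_in_singleton)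
lemma deg_e2: "x \<noteq> v \<Longrightarrow> deg_in G {e2} x = (if x = b then 1 else 0)"
  using l2 by (auto simp: deg_in_singleton)
lemma deg_new_edge: "deg_in G' {None} x = (if x = a then 1 else 0) + (if x = b then 1 else 0)"
  using ends_new_edge by (cases "a = b") (auto simp: deg_in_singleton)

lemma deg_in_suppress:
  assumes S: "S \<subseteq> snd B - {e1, e2}" and x: "x \<noteq> v"
  shows "deg_in G' (Some ` S \<union> {None}) x = deg_in G (S \<union> {e1, e2}) x"
proof -
  have finS: "finite S" using S B_finite finite_subset by blast
  have "deg_in G' (Some ` S \<union> {None}) x = deg_in G' (Some ` S) x + deg_in G' {None} x"
    using deg_in_Un[of "Some ` S" "{None}" G' x] finS by auto
  moreover have "deg_in G (S \<union> {e1, e2}) x = deg_in G S x + deg_in G {e1, e2} x"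
    using deg_in_Un[of S "{e1,e2}" G x] finS S by auto
  moreover have "deg_in G {e1, e2} x = deg_in G {e1} x + deg_in G {e2} x"
    using deg_in_Un[of "{e1}" "{e2}" G x] e12 by (simp add: insert_commute)
  ultimately show ?thesis using deg_in_suppress_Some deg_new_edge deg_e1[OF x] deg_e2[OF x] by simp
qed

lemma num_neg_suppress_odd_iff:
  assumes S: "S \<subseteq> snd B - {e1, e2}"
  shows "odd (num_neg G' (Some ` S \<union> {None})) \<longleftrightarrow> odd (num_neg G (S \<union> {e1, e2}))"
proof -
  have finS: "finite S" using S B_finite finite_subset by blast
  have "num_neg G' (Some ` S \<union> {None}) = num_neg G' (Some ` S) + num_neg G' {None}"
    using num_neg_Un[of "Some ` S" "{None}" G'] finS by auto
  moreover have "num_neg G (S \<union> {e1, e2}) = num_neg G S + num_neg G {e1, e2}"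
    using num_neg_Un[of S "{e1,e2}" G] finS S by auto
  moreover have "num_neg G {e1, e2} = num_neg G {e1} + num_neg G {e2}"
    using num_neg_Un[of "{e1}" "{e2}" G] e12 by (simp add: insert_commute)
  moreover have "num_neg G' {None} = (if neg G e1 \<noteq> neg G e2 then 1 else 0)"
  proof -
    have "{e\<in>{None}. neg G' e} = (if neg G e1 \<noteq> neg G e2 then {None} else {})" by auto
    then show ?thesis unfolding num_neg_def by simp
  qed
  moreover have "num_neg G {e} = (if neg G e then 1 else 0)" for e
  proof -
    have "{e'\<in>{e}. neg G e'} = (if neg G e then {e} else {})" by auto
    then show ?thesis unfolding num_neg_def by simp
  qed
  ultimately show ?thesis using num_neg_suppress_Some[of G B v e1 e2 S] by (cases "neg G e1"; cases "neg G e2") auto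
qed

lemma deg_e12_at_v: "deg_in G {e1,e2} v = 2"
proof -
  have "deg_in G {e1, e2} v = deg_in G {e1} v + deg_in G {e2} v"
    using deg_in_Un[of "{e1}" "{e2}" G v] e12 by (simp add: insert_commute)
  moreover have "deg_in G {e1} v = 1" "deg_in G {e2} v = 1" using l1 l2 by (auto simp: deg_in_singleton)
  ultimately show ?thesis by simp
qed

lemma circle_through_v_uses:
  assumes D: "circle G D" and DB: "sub_le D B" and vD: "v \<in> fst D"
  shows "e1 \<in> snd D" "e2 \<in> snd D"
proof -
  have d2: "deg_in G {e\<in>snd D. v \<in> ends G e} v = 2" using circle_deg[OF D vD] deg_in_at by metis
  have loc: "{e\<in>snd D. v \<in> ends G e} \<subseteq> {e1,e2}" using at DB by (auto simp: sub_le_def)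
  have one: "deg_in G {e} v = 1" if "e \<in> {e1, e2}" for e
    using that l1 l2 by (auto simp: deg_in_singleton)
  have "e \<in> snd D" if e: "e \<in> {e1, e2}" for e
  proof (rule ccontr)
    assume "e \<notin> snd D"
    then obtain e' where e': "e' \<in> {e1, e2}" "{e\<in>snd D. v \<in> ends G e} \<subseteq> {e'}"
      using loc e by blast
    then have "deg_in G {e\<in>snd D. v \<in> ends G e} v \<le> deg_in G {e'} v" by (intro deg_in_mono) auto
    then show False using d2 one[OF e'(1)] by simp
  qed
  then show "e1 \<in> snd D" "e2 \<in> snd D" by auto
qed

lemma rtranclp_adj_in_suppress:
  assumes S: "S \<subseteq> snd B - {e1, e2}" and x: "x \<noteq> v"
    and w: "(adj_in G (S \<union> {e1, e2}))\<^sup>*\<^sup>* x z"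
  shows "(adj_in G' (Some ` S \<union> {None}))\<^sup>*\<^sup>* x (if z = v then a else z)"
  using w
proof (induction rule: rtranclp_induct)
  case base then show ?case using x by simp
next
  case (step z z')
  define R' where "R' = adj_in G' (Some ` S \<union> {None})"
  define fz where "fz y = (if y = v then a else y)" for y
  obtain e where e: "e \<in> S \<union> {e1, e2}" "z \<in> ends G e" "z' \<in> ends G e"
    using step(2) by (auto simp: adj_in_def)
  have "R'\<^sup>*\<^sup>* (fz z) (fz z')"
  proof (cases "e \<in> {e1, e2}")
    case False
    then have "e \<in> S" "v \<notin> ends G e" using e S v_notin_other_ends by auto
    then have "R' z z'" "z \<noteq> v" "z' \<noteq> v" unfolding R'_def adj_in_def using e by force+
    then show ?thesis unfolding fz_def by auto
  next
    case True
    have "R' a b" "R' b a" "R' a a" "R' b b" unfolding R'_def adj_in_def using ends_new_edge by auto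
    then show ?thesis using True e l1 l2 unfolding fz_def by (auto intro: r_into_rtranclp)
  qed
  then show ?case using step(3) unfolding R'_def fz_def by (metis rtranclp_trans)
qed

lemma rtranclp_adj_in_lift:
  assumes S: "S \<subseteq> snd B - {e1, e2}" and w: "(adj_in G' (Some ` S \<union> {None}))\<^sup>*\<^sup>* x z"
  shows "(adj_in G (S \<union> {e1, e2}))\<^sup>*\<^sup>* x z"
  using w
proof (induction rule: rtranclp_induct)
  case (step y y')
  define R where "R = adj_in G (S \<union> {e1, e2})"
  have Rav: "R a v" "R v b" "R b v" "R v a" unfolding R_def adj_in_def using l1 l2 by auto
  obtain e' where e': "e' \<in> Some ` S \<union> {None}" "y \<in> ends G' e'" "y' \<in> ends G' e'"
    using step(2) unfolding adj_in_def by blast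
  have "R\<^sup>*\<^sup>* y y'"
  proof (cases e')
    case None
    then have "y \<in> {a, b}" "y' \<in> {a, b}" using e' ends_new_edge by auto
    then show ?thesis using Rav by (auto intro: rtranclp.rtrancl_into_rtrancl)
  next
    case (Some e)
    then have "R y y'" unfolding R_def adj_in_def using e' by auto
    then show ?thesis by simp
  qed
  then show ?case using step(3) unfolding R_def by (metis rtranclp_trans)
qed simp

lemma circ_suppress_circle:
  assumes D: "circle G D" and DB: "sub_le D B" and vD: "v \<in> fst D"
  shows "circle G' (circ_suppress D v e1 e2)"
    "negative G' (circ_suppress D v e1 e2) \<longleftrightarrow> negative G D"
proof -
  have u: "e1 \<in> snd D" "e2 \<in> snd D" using circle_through_v_uses[OF assms] by auto
  define S where "S = snd D - {e1,e2}"
  have SB: "S \<subseteq> snd B - {e1,e2}" using DB S_def by (auto simp: sub_le_def)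
  have SD: "S \<union> {e1,e2} = snd D" using u S_def by auto
  have cs: "circ_suppress D v e1 e2 = (fst D - {v}, Some ` S \<union> {None})" using circ_suppress_def S_def by simp
  have aD: "a \<in> fst D" "b \<in> fst D" using circle_ends[OF D] u l1 l2 by auto
  have Dends: "ends G e \<subseteq> fst D" if "e \<in> snd D" for e using circle_ends[OF D that] .
  have issub: "is_sub G' (fst D - {v}, Some ` S \<union> {None})"
    unfolding is_sub_def
  proof (intro conjI ballI)
    show "fst (fst D - {v}, Some ` S \<union> {None}) \<subseteq> verts G'" using DB by (auto simp: sub_le_def)
    show "snd (fst D - {v}, Some ` S \<union> {None}) \<subseteq> edges G'" using SB by auto
    fix e' assume "e' \<in> snd (fst D - {v}, Some ` S \<union> {None})"
    then have "e' = None \<or> (\<exists>e\<in>S. e' = Some e)" by auto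
    then show "ends G' e' \<subseteq> fst (fst D - {v}, Some ` S \<union> {None})"
    proof
      assume "e' = None" then show ?thesis using ends_new_edge aD l1 l2 by auto
    next
      assume "\<exists>e\<in>S. e' = Some e"
      then obtain e where e: "e \<in> S" "e' = Some e" by blast
      then have "v \<notin> ends G e" using v_notin_other_ends SB by blast
      then show ?thesis using e Dends S_def by auto
    qed
  qed
  have deg: "deg_in G' (Some ` S \<union> {None}) x = 2" if "x \<in> fst D - {v}" for x
    using deg_in_suppress[OF SB] that SD circle_deg[OF D] by auto
  have conn: "connected_sub G' (fst D - {v}, Some ` S \<union> {None})"
    unfolding connected_sub_def
  proof (intro conjI ballI)
    show "fst (fst D - {v}, Some ` S \<union> {None}) \<noteq> {}" using aD l1 by auto
    fix x y assume "x \<in> fst (fst D - {v}, Some ` S \<union> {None})" "y \<in> fst (fst D - {v}, Some ` S \<union> {None})"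
    moreover from this have "(adj_in G (S \<union> {e1, e2}))\<^sup>*\<^sup>* x y"
      using D SD by (auto simp: circle_def connected_sub_def)
    ultimately show "(adj_in G' (snd (fst D - {v}, Some ` S \<union> {None})))\<^sup>*\<^sup>* x y"
      using rtranclp_adj_in_suppress[OF SB] by fastforce
  qed
  show "circle G' (circ_suppress D v e1 e2)" unfolding cs circle_def using issub conn deg by auto
  show "negative G' (circ_suppress D v e1 e2) \<longleftrightarrow> negative G D"
    unfolding cs negative_iff_num_neg using num_neg_suppress_odd_iff[OF SB] SD by simp
qed

lemma circle_lift:
  assumes D': "circle G' D'" and N: "None \<in> snd D'"
  shows "\<exists>D. circle G D \<and> sub_le D B \<and> v \<in> fst D \<and> circ_suppress D v e1 e2 = D' \<and>
           (negative G' D' \<longleftrightarrow> negative G D)"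
proof -
  define S where "S = {e. Some e \<in> snd D'}"
  define D where "D = (insert v (fst D'), S \<union> {e1,e2})"
  have D'sub: "is_sub G' D'" using circle_is_sub[OF D'] .
  have SB: "S \<subseteq> snd B - {e1,e2}" using D'sub S_def by (auto simp: is_sub_def)
  have sD': "snd D' = Some ` S \<union> {None}"
  proof
    show "snd D' \<subseteq> Some ` S \<union> {None}"
    proof
      fix e' assume "e' \<in> snd D'"
      then show "e' \<in> Some ` S \<union> {None}" using S_def by (cases e') auto
    qed
    show "Some ` S \<union> {None} \<subseteq> snd D'" using N S_def by auto
  qed
  have fD': "fst D' \<subseteq> fst B - {v}" using D'sub by (auto simp: is_sub_def)
  have abD': "a \<in> fst D'" "b \<in> fst D'" using circle_ends[OF D' N] ends_new_edge by auto
  have vG: "v \<in> verts G"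
  proof -
    have "ends G e1 \<subseteq> fst B" "fst B \<subseteq> verts G" using Bs e12_in_B by (auto simp: is_sub_def)
    then show ?thesis using l1 by auto
  qed
  have SD'e: "ends G e \<subseteq> fst D'" if "e \<in> S" for e
    using circle_ends[OF D', of "Some e"] that S_def by auto
  have issub: "is_sub G D"
    unfolding is_sub_def D_def
  proof (intro conjI ballI)
    show "fst (insert v (fst D'), S \<union> {e1, e2}) \<subseteq> verts G" using vG fD' Bs by (auto simp: is_sub_def)
    show "snd (insert v (fst D'), S \<union> {e1, e2}) \<subseteq> edges G" using SB e12_in_B Bs by (auto simp: is_sub_def)
    fix e assume "e \<in> snd (insert v (fst D'), S \<union> {e1, e2})"
    then show "ends G e \<subseteq> fst (insert v (fst D'), S \<union> {e1, e2})" using SD'e l1 l2 abD' by auto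
  qed
  have degv: "deg_in G (S \<union> {e1,e2}) v = 2"
  proof -
    have "{e\<in>S \<union> {e1,e2}. v \<in> ends G e} = {e1,e2}" using SB v_notin_other_ends l1 l2 by auto
    then show ?thesis using deg_in_at[of G "S \<union> {e1,e2}" v] deg_e12_at_v by simp
  qed
  have degx: "deg_in G (S \<union> {e1,e2}) x = 2" if "x \<in> fst D'" for x
  proof -
    have "x \<noteq> v" using that fD' by auto
    then have "deg_in G (S \<union> {e1,e2}) x = deg_in G' (snd D') x" using deg_in_suppress[OF SB] sD' by simp
    then show ?thesis using circle_deg[OF D' that] by simp
  qed
  define R where "R = adj_in G (S \<union> {e1,e2})"
  have tov: "R\<^sup>*\<^sup>* x v" if "x \<in> insert v (fst D')" for x
  proof (cases "x = v")
    case False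
    then have "x \<in> fst D'" using that by simp
    then have "(adj_in G' (snd D'))\<^sup>*\<^sup>* x a" using D' abD' by (auto simp: circle_def connected_sub_def)
    then have "R\<^sup>*\<^sup>* x a" using rtranclp_adj_in_lift[OF SB] sD' unfolding R_def by simp
    moreover have "R a v" unfolding R_def adj_in_def using l1 by auto
    ultimately show ?thesis by (meson rtranclp.rtrancl_into_rtrancl)
  qed simp
  have conn: "connected_sub G D"
    unfolding connected_sub_def
  proof (intro conjI ballI)
    show "fst D \<noteq> {}" using D_def by simp
    fix x y assume "x \<in> fst D" "y \<in> fst D"
    then have "R\<^sup>*\<^sup>* x v" "R\<^sup>*\<^sup>* y v" using tov D_def by auto
    then show "(adj_in G (snd D))\<^sup>*\<^sup>* x y" unfolding D_def R_def
      using adj_in_rtranclp_sym rtranclp_trans R_def by (metis snd_conv)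
  qed
  have circ: "circle G D" unfolding circle_def using issub conn degv degx D_def by auto
  have vnot: "v \<notin> fst D'" using fD' by auto
  have SI: "S \<inter> {e1,e2} = {}" using SB by auto
  have cs: "circ_suppress D v e1 e2 = D'"
  proof -
    have "S \<union> {e1,e2} - {e1,e2} = S" using SI by auto
    then show ?thesis unfolding circ_suppress_def D_def using vnot sD' by (simp add: prod_eq_iff)
  qed
  have ng: "negative G' D' \<longleftrightarrow> negative G D"
    unfolding negative_iff_num_neg D_def using num_neg_suppress_odd_iff[OF SB] sD' by simp
  have "sub_le D B" using SB e12_in_B fD' Bs e12_in_B l1 unfolding D_def sub_le_def is_sub_def by auto
  then show ?thesis using circ cs ng D_def by auto
qed

lemma circ_suppress_inj:
  assumes D: "circle G D" "sub_le D B" "v \<in> fst D" and E: "circle G E" "sub_le E B" "v \<in> fst E"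
    and eq: "circ_suppress D v e1 e2 = circ_suppress E v e1 e2"
  shows "D = E"
proof -
  have u: "e1 \<in> snd D" "e2 \<in> snd D" "e1 \<in> snd E" "e2 \<in> snd E"
    using circle_through_v_uses[OF D] circle_through_v_uses[OF E] by auto
  have f: "fst D - {v} = fst E - {v}" and s: "Some ` (snd D - {e1,e2}) \<union> {None} = Some ` (snd E - {e1,e2}) \<union> {None}"
    using eq unfolding circ_suppress_def by auto
  have "Some ` (snd D - {e1,e2}) = Some ` (snd E - {e1,e2})"
  proof -
    have "None \<notin> Some ` (snd D - {e1,e2})" "None \<notin> Some ` (snd E - {e1,e2})" by auto
    then show ?thesis using s by blast
  qed
  then have "snd D - {e1,e2} = snd E - {e1,e2}" by (simp add: inj_image_eq_iff)
  then have "snd D = snd E" using u by blast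
  moreover have "fst D = fst E" using f D(3) E(3) by blast
  ultimately show ?thesis by (simp add: prod_eq_iff)
qed

text \<open>Suppressing v is a sign-preserving bijection between the circles of B through v
  and the circles of B\<down>v through the new edge.\<close>
lemma vertex_battery_iff_edge_battery:
  assumes C: "circle G C" "sub_le C B" "v \<in> fst C"
    and in_B: "\<And>D. circle G D \<Longrightarrow> v \<in> fst D \<Longrightarrow> negative G D \<Longrightarrow> sub_le D B"
  shows "neg_vertex_battery G v C \<longleftrightarrow> neg_edge_battery G' None (circ_suppress C v e1 e2)"
proof
  assume bat: "neg_vertex_battery G v C"
  show "neg_edge_battery G' None (circ_suppress C v e1 e2)"
    unfolding neg_edge_battery_def
  proof (intro conjI allI impI)
    show "circle G' (circ_suppress C v e1 e2)" "negative G' (circ_suppress C v e1 e2)"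
      using circ_suppress_circle[OF C] neg_vertex_batteryD(3)[OF bat] by auto
    show "None \<in> snd (circ_suppress C v e1 e2)" by (simp add: circ_suppress_def)
    fix D' assume D': "circle G' D' \<and> None \<in> snd D' \<and> negative G' D'"
    then obtain D where D: "circle G D" "v \<in> fst D" "negative G D" "circ_suppress D v e1 e2 = D'"
      using circle_lift[of D'] by blast
    then have "D = C" using neg_vertex_batteryD(4)[OF bat] by blast
    then show "D' = circ_suppress C v e1 e2" using D(4) by simp
  qed
next
  assume bat: "neg_edge_battery G' None (circ_suppress C v e1 e2)"
  have "D = C" if D: "circle G D" "v \<in> fst D" "negative G D" for D
  proof -
    have DB: "sub_le D B" using in_B[OF D] .
    have "circle G' (circ_suppress D v e1 e2)" "negative G' (circ_suppress D v e1 e2)"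
      using circ_suppress_circle[OF D(1) DB D(2)] D(3) by auto
    moreover have "None \<in> snd (circ_suppress D v e1 e2)" by (simp add: circ_suppress_def)
    ultimately have "circ_suppress D v e1 e2 = circ_suppress C v e1 e2"
      using bat unfolding neg_edge_battery_def by blast
    then show ?thesis using circ_suppress_inj[OF D(1) DB D(2) C] by blast
  qed
  moreover have "negative G C"
    using bat circ_suppress_circle[OF C] by (simp add: neg_edge_battery_def)
  ultimately show "neg_vertex_battery G v C"
    using C by (blast intro: neg_vertex_batteryI)
qed

end

section \<open>Vertex batteries\<close>

lemma inseparable_loop_only:
  assumes H: "inseparable G H" and l: "l \<in> snd H" "card (ends G l) = 1"
  shows "snd H = {l}"
proof -
  obtain x where "ends G l = {x}" using l(2) by (rule card_1_singletonE)
  then show ?thesis using inseparable_loop[OF H l(1)] l(1) by blast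
qed

lemma circle_in_block:
  assumes "sgraph_wf G" "circle G D"
  obtains B where "block G B" "sub_le D B"
  using inseparable_sub_le_block[OF assms(1) circle_inseparable[OF assms]] by blast

lemma block_edge_card:
  assumes "sgraph_wf G" "block G B" "e \<in> snd B"
  shows "card (ends G e) = 1 \<or> card (ends G e) = 2"
  using sgraph_wf_edge(2)[OF assms(1)] inseparable_is_sub[OF block_inseparable[OF assms(2)]] assms(3)
  by (auto simp: is_sub_def)

lemma block_suppression:
  assumes wf: "sgraph_wf G" and B: "block G B"
    and e: "e1 \<noteq> e2" "{e\<in>snd B. v \<in> ends G e} = {e1, e2}"
  obtains a b where "suppression G B v e1 e2 a b"
proof -
  have Bi: "inseparable G B" using block_inseparable[OF B] .
  have link: "\<exists>a. ends G e = {v, a} \<and> a \<noteq> v" if "e \<in> {e1, e2}" for e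
  proof -
    have eB: "e \<in> snd B" "v \<in> ends G e" using that e(2) by blast+
    have "e1 \<in> snd B" "e2 \<in> snd B" using e(2) by blast+
    then have "snd B \<noteq> {e}" using e(1) by auto
    then have "card (ends G e) \<noteq> 1" using inseparable_loop_only[OF Bi eB(1)] by blast
    then have "card (ends G e) = 2" using block_edge_card[OF wf B eB(1)] by blast
    then show ?thesis using card_2_obtain_other[OF _ eB(2)] by metis
  qed
  obtain a b where "ends G e1 = {v, a}" "a \<noteq> v" "ends G e2 = {v, b}" "b \<noteq> v"
    using link[of e1] link[of e2] by blast
  then show thesis
    using that wf inseparable_is_sub[OF Bi] e by (simp add: suppression_def)
qed

lemma deg_2_edges_at_vertex:
  assumes links: "\<forall>e\<in>F. card (ends G e) = 2" and deg: "deg_in G F v = 2"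
  obtains e1 e2 where "e1 \<noteq> e2" "{e\<in>F. v \<in> ends G e} = {e1, e2}"
proof -
  have no_loop: "{e\<in>F. ends G e = {v}} = {}" using links by auto
  have "{e\<in>F. v \<in> ends G e \<and> card (ends G e) = 2} = {e\<in>F. v \<in> ends G e}"
    using links by auto
  then have "card {e\<in>F. v \<in> ends G e} = 2" using deg unfolding deg_in_def no_loop by simp
  then show thesis using that unfolding card_2_iff by blast
qed

lemma negative_circle_through_vertex_in_block:
  assumes wf: "sgraph_wf G" and D: "circle G D" "v \<in> fst D" "negative G D"
    and unique: "\<forall>B'. block G B' \<and> v \<in> fst B' \<and> unbalanced (restr G B') \<longrightarrow> B' = B"
  shows "sub_le D B"
proof -
  obtain B' where B': "block G B'" "sub_le D B'" using circle_in_block[OF wf D(1)] .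
  have "unbalanced (restr G B')"
    using D B' unbalanced_restr_iff[OF inseparable_is_sub[OF block_inseparable[OF B'(1)]]] by blast
  moreover have "v \<in> fst B'" using B'(2) D(2) by (auto simp: sub_le_def)
  ultimately show ?thesis using unique B' by blast
qed

text \<open>A second unbalanced block at v would carry a negative circle through v, which would
  have to be C.\<close>
lemma vertex_battery_unique_unbalanced_block:
  assumes wf: "sgraph_wf G" and bat: "neg_vertex_battery G v C"
    and B: "block G B" "sub_le C B" and B': "block G B'" "v \<in> fst B'" "unbalanced (restr G B')"
  shows "B' = B"
proof -
  obtain D where D: "circle G D" "negative G D" "sub_le D B'"
    using B'(3) unbalanced_restr_iff[OF inseparable_is_sub[OF block_inseparable[OF B'(1)]]] by blast
  obtain Z where Z: "circle G Z" "negative G Z" "sub_le Z B'" "v \<in> fst Z"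
    using inseparable_negative_circle_through_vertex[OF wf block_inseparable[OF B'(1)] D B'(2)] by blast
  have "Z = C" using neg_vertex_batteryD(4)[OF bat] Z by blast
  obtain e where "e \<in> snd C" using circle_nonempty(2)[OF neg_vertex_batteryD(1)[OF bat]] by blast
  then have "e \<in> snd B'" "e \<in> snd B" using \<open>Z = C\<close> Z(3) B(2) by (auto simp: sub_le_def)
  then show ?thesis using block_eq_if_common_edge[OF wf B'(1) B(1)] by blast
qed

text \<open>An edge of B at v off C is a link (B is not a single loop), so an ear through it
  yields a second negative circle through v.\<close>
lemma vertex_battery_block_deg:
  assumes wf: "sgraph_wf G" and bat: "neg_vertex_battery G v C"
    and B: "block G B" "sub_le C B"
  shows "deg_in G (snd B) v = 2"
proof (rule ccontr)
  assume nd: "deg_in G (snd B) v \<noteq> 2"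
  note C = neg_vertex_batteryD(1-3)[OF bat]
  have Bi: "inseparable G B" using block_inseparable[OF B(1)] .
  have CB: "snd C \<subseteq> snd B" using B(2) by (simp add: sub_le_def)
  have finB: "finite (snd B)"
    using inseparable_is_sub[OF Bi] sgraph_wf_finite(2)[OF wf]
    by (auto simp: is_sub_def intro: finite_subset)
  have "deg_in G (snd B - snd C) v \<noteq> 0"
    using deg_in_Diff[OF finB CB, of G v] nd circle_deg[OF C(1,2)] by simp
  then obtain f where f: "f \<in> snd B" "f \<notin> snd C" "v \<in> ends G f"
    using deg_in_neq_0_edge[of G "snd B - snd C" v] by blast
  obtain c where "c \<in> snd C" using circle_nonempty(2)[OF C(1)] by blast
  then have "snd B \<noteq> {f}" using CB f(2) by auto
  then have "card (ends G f) = 2"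
    using block_edge_card[OF wf B(1) f(1)] inseparable_loop_only[OF Bi f(1)] by blast
  then obtain Z where Z: "circle G Z" "negative G Z" "f \<in> snd Z"
    using inseparable_negative_circle_through_link[OF wf Bi C(1,3) B(2) C(2) f] by blast
  have "v \<in> fst Z" using circle_ends[OF Z(1) Z(3)] f(3) by blast
  then have "Z = C" using neg_vertex_batteryD(4)[OF bat] Z by blast
  then show False using Z(3) f(2) by blast
qed

lemma vertex_battery_block_conditions:
  assumes wf: "sgraph_wf G" and bat: "neg_vertex_battery G v C"
  shows "\<exists>B. block G B \<and> sub_le C B \<and>
       unbalanced (restr G B) \<and>
       (\<forall>B'. block G B' \<and> v \<in> fst B' \<and> unbalanced (restr G B') \<longrightarrow> B' = B) \<and>
       deg_in G (snd B) v = 2 \<and>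
       (\<forall>e1 e2. e1 \<noteq> e2 \<and> {e\<in>snd B. v \<in> ends G e} = {e1, e2} \<longrightarrow>
          neg_edge_battery (suppress G B v e1 e2) None (circ_suppress C v e1 e2))"
proof -
  note C = neg_vertex_batteryD(1-3)[OF bat]
  obtain B where B: "block G B" "sub_le C B" using circle_in_block[OF wf C(1)] .
  have unique: "\<forall>B'. block G B' \<and> v \<in> fst B' \<and> unbalanced (restr G B') \<longrightarrow> B' = B"
    using vertex_battery_unique_unbalanced_block[OF wf bat B] by blast
  have "unbalanced (restr G B)"
    using C B unbalanced_restr_iff[OF inseparable_is_sub[OF block_inseparable[OF B(1)]]] by blast
  moreover have "neg_edge_battery (suppress G B v e1 e2) None (circ_suppress C v e1 e2)"
    if e: "e1 \<noteq> e2" "{e\<in>snd B. v \<in> ends G e} = {e1, e2}" for e1 e2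
  proof -
    obtain a b where S: "suppression G B v e1 e2 a b" using block_suppression[OF wf B(1) e] .
    have in_B: "sub_le D B" if "circle G D" "v \<in> fst D" "negative G D" for D
      using negative_circle_through_vertex_in_block[OF wf that unique] .
    show ?thesis
      using suppression.vertex_battery_iff_edge_battery[OF S C(1) B(2) C(2) in_B] bat by simp
  qed
  ultimately show ?thesis using B unique vertex_battery_block_deg[OF wf bat B] by blast
qed

lemma loop_block_vertex_battery:
  assumes wf: "sgraph_wf G" and C: "circle G C" "v \<in> fst C"
    and B: "block G B" "sub_le C B" "unbalanced (restr G B)"
    and l: "l \<in> snd B" "card (ends G l) = 1"
    and in_B: "\<And>D. circle G D \<Longrightarrow> v \<in> fst D \<Longrightarrow> negative G D \<Longrightarrow> sub_le D B"
  shows "neg_vertex_battery G v C"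
proof -
  have loop: "snd B = {l}" using inseparable_loop_only[OF block_inseparable[OF B(1)] l] .
  have only_C: "Z = C" if "circle G Z" "sub_le Z B" for Z
  proof -
    have "snd Z = {l}" "snd C = {l}"
      using that B(2) loop circle_nonempty(2)[OF that(1)] circle_nonempty(2)[OF C(1)]
      by (auto simp: sub_le_def)
    then show ?thesis using circle_eq_if_edges_subset[OF wf that(1) C(1)] by simp
  qed
  obtain D where "circle G D" "negative G D" "sub_le D B"
    using B(3) unbalanced_restr_iff[OF inseparable_is_sub[OF block_inseparable[OF B(1)]]] by blast
  then show ?thesis using C only_C in_B by (blast intro: neg_vertex_batteryI)
qed

lemma vertex_battery_if_block_conditions:
  assumes wf: "sgraph_wf G" and C: "circle G C" "v \<in> fst C"
    and B: "block G B" "sub_le C B" "unbalanced (restr G B)"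
    and unique: "\<forall>B'. block G B' \<and> v \<in> fst B' \<and> unbalanced (restr G B') \<longrightarrow> B' = B"
    and deg: "deg_in G (snd B) v = 2"
    and bat: "\<forall>e1 e2. e1 \<noteq> e2 \<and> {e\<in>snd B. v \<in> ends G e} = {e1, e2} \<longrightarrow>
          neg_edge_battery (suppress G B v e1 e2) None (circ_suppress C v e1 e2)"
  shows "neg_vertex_battery G v C"
proof -
  have in_B: "sub_le D B" if "circle G D" "v \<in> fst D" "negative G D" for D
    using negative_circle_through_vertex_in_block[OF wf that unique] .
  show ?thesis
  proof (cases "\<exists>l\<in>snd B. card (ends G l) = 1")
    case True
    then obtain l where "l \<in> snd B" "card (ends G l) = 1" by blast
    then show ?thesis using loop_block_vertex_battery[OF wf C B _ _ in_B] by blast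
  next
    case False
    then have "\<forall>e\<in>snd B. card (ends G e) = 2" using block_edge_card[OF wf B(1)] by blast
    then obtain e1 e2 where e: "e1 \<noteq> e2" "{e\<in>snd B. v \<in> ends G e} = {e1, e2}"
      using deg_2_edges_at_vertex[OF _ deg] by blast
    obtain a b where S: "suppression G B v e1 e2 a b" using block_suppression[OF wf B(1) e] .
    show ?thesis
      using suppression.vertex_battery_iff_edge_battery[OF S C(1) B(2) C(2) in_B] bat e by blast
  qed
qed

theorem mainTheorem10:
  fixes G :: "('v,'e) sgraph" and v :: 'v and C :: "('v,'e) subg"
  assumes "sgraph_wf G"
    and "v \<in> verts G"
    and "\<forall>B. block G B \<and> v \<in> fst B \<longrightarrow> (\<exists>D. circle G D \<and> sub_le D B)"
    and "circle G C" and "v \<in> fst C"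
  shows "neg_vertex_battery G v C \<longleftrightarrow>
    (\<exists>B. block G B \<and> sub_le C B \<and>
       unbalanced (restr G B) \<and>
       (\<forall>B'. block G B' \<and> v \<in> fst B' \<and> unbalanced (restr G B') \<longrightarrow> B' = B) \<and>
       deg_in G (snd B) v = 2 \<and>
       (\<forall>e1 e2. e1 \<noteq> e2 \<and> {e\<in>snd B. v \<in> ends G e} = {e1, e2} \<longrightarrow>
          neg_edge_battery (suppress G B v e1 e2) None (circ_suppress C v e1 e2)))"
  by (rule iffI, erule vertex_battery_block_conditions[OF assms(1)],
      elim exE conjE, rule vertex_battery_if_block_conditions[OF assms(1,4,5)], assumption+)

end
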